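(* Let $(X,d,G)$ be a $G$-system. Then for every tempered two-sided Følner sequence $\{F_n\}$ of $G$, $$\overline{\mathrm{mdim}}_M(G,X,d)=\max_{x\in X}\overline{\mathrm{mdim}}_M(x,\{F_n\},d)=\max_{\mu\in M(X,G)}\int\overline{\mathrm{mdim}}_M(x,\{F_n\},d)\,d\mu(x).$$
   Context: $G$ is a countably infinite discrete amenable group; a $G$-system $(X,d,G)$ is a compact metric space with a continuous $G$-action by homeomorphisms. A Følner sequence $\{F_n\}$: nonempty finite sets with $|gF_n\triangle F_n|/|F_n|\to0$ for all $g$; two-sided if also $|F_ng\triangle F_n|/|F_n|\to0$ for all $g$; tempered if $|\bigcup_{j<n}F_j^{-1}F_n|\le C|F_n|$ for some $C>0$ and all $n$. $d_F(x,y)=\max_{g\in F}d(gx,gy)$. For nonempty $Z\subset X$, $s(Z,d_F,\epsilon)$ is the maximal cardinality of a subset of $Z$ whose distinct points have $d_F$-distance $>\epsilon$; $h_{top}(G,Z,d,\{F_n\},\epsilon)=\limsup_n\frac1{|F_n|}\log s(Z,d_{F_n},\epsilon)$; $\overline{\mathrm{mdim}}_M(G,Z,\{F_n\},d)=\limsup_{\epsilon\to0}h_{top}(G,Z,d,\{F_n\},\epsilon)/\log\frac1\epsilon$, and $\overline{\mathrm{mdim}}_M(G,X,d)$ denotes this for $Z=X$. The local upper metric mean dimension of $x\in X$ is $\overline{\mathrm{mdim}}_M(x,\{F_n\},d)=\inf_K\overline{\mathrm{mdim}}_M(G,K,\{F_n\},d)$, the infimum over all closed neighborhoods $K$ of $x$.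 $M(X,G)$ is the set of $G$-invariant Borel probability measures. *)

theory Defs
  imports "HOL-Analysis.Analysis" "HOL-Probability.Probability"
begin

text \<open>The countable discrete group G is a type of class group_add (written additively,
  not assumed commutative). Group action T on a compact set X of a metric space
  (the metric d is dist).\<close>

definition left_transl :: "'g::group_add \<Rightarrow> 'g set \<Rightarrow> 'g set" where
  "left_transl g F = (\<lambda>h. g + h) ` F"

definition right_transl :: "'g set \<Rightarrow> 'g::group_add \<Rightarrow> 'g set" where
  "right_transl F g = (\<lambda>h. h + g) ` F"

definition symdiff :: "'a set \<Rightarrow> 'a set \<Rightarrow> 'a set" where
  "symdiff A B = (A - B) \<union> (B - A)"

definition folner_seq :: "(nat \<Rightarrow> 'g::group_add set) \<Rightarrow> bool" where
  "folner_seq F \<longleftrightarrow> (\<forall>n. finite (F n) \<and> F n \<noteq> {}) \<and>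
     (\<forall>g. (\<lambda>n. real (card (symdiff (left_transl g (F n)) (F n))) / real (card (F n)))
            \<longlonglongrightarrow> 0)"

definition two_sided_folner_seq :: "(nat \<Rightarrow> 'g::group_add set) \<Rightarrow> bool" where
  "two_sided_folner_seq F \<longleftrightarrow> folner_seq F \<and>
     (\<forall>g. (\<lambda>n. real (card (symdiff (right_transl (F n) g) (F n))) / real (card (F n)))
            \<longlonglongrightarrow> 0)"

text \<open>F_j^{-1} F_n = {a^{-1} b | a \<in> F_j, b \<in> F_n}.\<close>
definition tempered :: "(nat \<Rightarrow> 'g::group_add set) \<Rightarrow> bool" where
  "tempered F \<longleftrightarrow> (\<exists>C>0. \<forall>n.
     real (card (\<Union>j<n. {- a + b | a b. a \<in> F j \<and> b \<in> F n})) \<le> C * real (card (F n)))"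

definition amenable_group :: "'g::group_add itself \<Rightarrow> bool" where
  "amenable_group _ \<longleftrightarrow> (\<exists>F :: nat \<Rightarrow> 'g set. folner_seq F)"

definition G_system :: "'a::metric_space set \<Rightarrow> ('g::group_add \<Rightarrow> 'a \<Rightarrow> 'a) \<Rightarrow> bool" where
  "G_system X T \<longleftrightarrow> compact X \<and>
     (\<forall>g. T g ` X \<subseteq> X \<and> continuous_on X (T g)) \<and>
     (\<forall>x\<in>X. T 0 x = x) \<and>
     (\<forall>g h. \<forall>x\<in>X. T (g + h) x = T g (T h x))"

definition bowen_dist :: "('g \<Rightarrow> 'a \<Rightarrow> 'a::metric_space) \<Rightarrow> 'g set \<Rightarrow> 'a \<Rightarrow> 'a \<Rightarrow> real" where
  "bowen_dist T F x y = Max ((\<lambda>g. dist (T g x) (T g y)) ` F)"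

definition sep_num :: "('g \<Rightarrow> 'a \<Rightarrow> 'a::metric_space) \<Rightarrow> 'a set \<Rightarrow> 'g set \<Rightarrow> real \<Rightarrow> nat" where
  "sep_num T Z F eps = Sup {card E | E. E \<subseteq> Z \<and> finite E \<and>
      (\<forall>x\<in>E. \<forall>y\<in>E. x \<noteq> y \<longrightarrow> bowen_dist T F x y > eps)}"

definition htop_eps :: "('g \<Rightarrow> 'a \<Rightarrow> 'a::metric_space) \<Rightarrow> 'a set \<Rightarrow> (nat \<Rightarrow> 'g set) \<Rightarrow> real \<Rightarrow> ereal" where
  "htop_eps T Z F eps =
     limsup (\<lambda>n. ereal (ln (real (sep_num T Z (F n) eps)) / real (card (F n))))"

text \<open>Upper metric mean dimension of Z (log base cancels in the ratio; we use ln).\<close>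
definition umdim_M :: "('g \<Rightarrow> 'a \<Rightarrow> 'a::metric_space) \<Rightarrow> 'a set \<Rightarrow> (nat \<Rightarrow> 'g set) \<Rightarrow> ereal" where
  "umdim_M T Z F = Limsup (at_right 0) (\<lambda>eps. htop_eps T Z F eps / ereal (ln (1 / eps)))"

definition local_umdim_M :: "'a::metric_space set \<Rightarrow> ('g \<Rightarrow> 'a \<Rightarrow> 'a) \<Rightarrow> (nat \<Rightarrow> 'g set) \<Rightarrow> 'a \<Rightarrow> ereal" where
  "local_umdim_M X T F x = (INF K \<in> {K. K \<subseteq> X \<and> closed K \<and>
       (\<exists>U. open U \<and> x \<in> U \<and> U \<inter> X \<subseteq> K)}. umdim_M T K F)"

definition invariant_measures :: "'a::metric_space set \<Rightarrow> ('g \<Rightarrow> 'a \<Rightarrow> 'a) \<Rightarrow> 'a measure set" where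
  "invariant_measures X T = {\<mu>. prob_space \<mu> \<and> sets \<mu> = sets (restrict_space borel X) \<and>
     (\<forall>g. T g \<in> measurable \<mu> \<mu> \<and>
          (\<forall>A\<in>sets \<mu>. emeasure \<mu> (T g -` A \<inter> space \<mu>) = emeasure \<mu> A))}"

end

theory Submission
  imports Defs
begin

text \<open>The mean dimension of a finite union of sets is the maximum of their mean dimensions, so by
  compactness some point has local mean dimension equal to the global one. The set \<open>A\<close> of such points
  is closed, because the local mean dimension is upper semicontinuous, and invariant: translating a
  set by \<open>g\<close> replaces the windows \<open>F\<^sub>n\<close> by \<open>F\<^sub>n g\<close>, which by the two-sided Folner property
  differ from \<open>F\<^sub>n\<close> in \<open>o(|F\<^sub>n|)\<close> elements. A Krylov--Bogolyubov argument along \<open>F\<^sub>n\<close> then yields an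
  invariant measure concentrated on \<open>A\<close>; since the local mean dimension never exceeds the global one,
  this measure attains the maximal integral. Weak limits of measures on the compact metric space are
  obtained from Helly's selection theorem on the real line, transported along a Borel injection
  into \<open>[0,1]\<close> with uniformly continuous inverse.\<close>

section \<open>Separated sets\<close>

lemma compact_quantizer:
  fixes X :: "'a::metric_space set"
  assumes "compact X" "r > 0"
  obtains k :: "'a set" and q :: "'a \<Rightarrow> 'a" where "finite k" "\<And>y. y \<in> X \<Longrightarrow> q y \<in> k"
    "\<And>y z. y \<in> X \<Longrightarrow> z \<in> X \<Longrightarrow> q y = q z \<Longrightarrow> dist y z < 2 * r"
proof -
  obtain k where "finite k" "X \<subseteq> (\<Union>c\<in>k. ball c r)"
    using seq_compact_imp_totally_bounded[OF compact_imp_seq_compact[OF assms(1)]] assms(2) by meson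
  then have "\<forall>y\<in>X. \<exists>c. c \<in> k \<and> dist y c < r"
    by (force simp: dist_commute)
  then obtain q where q: "\<And>y. y \<in> X \<Longrightarrow> q y \<in> k \<and> dist y (q y) < r"
    by metis
  have "dist y z < 2 * r" if "y \<in> X" "z \<in> X" "q y = q z" for y z
    using dist_triangle_less_add[of y "q y" r z r] q[OF that(1)] q[OF that(2)] that(3)
    by (simp add: dist_commute)
  then show ?thesis
    using that[of k q] \<open>finite k\<close> q by simp
qed

lemma bowen_dist_le_iff:
  "finite F \<Longrightarrow> F \<noteq> {} \<Longrightarrow> bowen_dist T F x y \<le> e \<longleftrightarrow> (\<forall>g\<in>F. dist (T g x) (T g y) \<le> e)"
  unfolding bowen_dist_def by simp

lemma bowen_dist_less_iff:
  "finite F \<Longrightarrow> F \<noteq> {} \<Longrightarrow> bowen_dist T F x y < e \<longleftrightarrow> (\<forall>g\<in>F. dist (T g x) (T g y) < e)"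
  unfolding bowen_dist_def by simp

lemma dist_le_bowen_dist: "finite F \<Longrightarrow> g \<in> F \<Longrightarrow> dist (T g x) (T g y) \<le> bowen_dist T F x y"
  unfolding bowen_dist_def by (intro Max_ge) auto

lemma bowen_dist_self: "finite F \<Longrightarrow> F \<noteq> {} \<Longrightarrow> bowen_dist T F x x = 0"
  unfolding bowen_dist_def by (simp add: image_constant_conv)

lemma bowen_dist_commute: "bowen_dist T F x y = bowen_dist T F y x"
  unfolding bowen_dist_def by (simp add: dist_commute)

lemma bowen_dist_triangle:
  assumes "finite F" "F \<noteq> {}"
  shows "bowen_dist T F x z \<le> bowen_dist T F x y + bowen_dist T F y z"
proof -
  have "dist (T g x) (T g z) \<le> bowen_dist T F x y + bowen_dist T F y z" if "g \<in> F" for g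
  proof -
    have "dist (T g x) (T g z) \<le> dist (T g x) (T g y) + dist (T g y) (T g z)"
      by (rule dist_triangle)
    also have "\<dots> \<le> bowen_dist T F x y + bowen_dist T F y z"
      by (intro add_mono dist_le_bowen_dist assms(1) that)
    finally show ?thesis .
  qed
  then show ?thesis
    using bowen_dist_le_iff[OF assms] by blast
qed

definition bowen_separated :: "('g \<Rightarrow> 'a \<Rightarrow> 'a::metric_space) \<Rightarrow> 'g set \<Rightarrow> real \<Rightarrow> 'a set \<Rightarrow> bool" where
  "bowen_separated T F eps E \<longleftrightarrow> finite E \<and> (\<forall>x\<in>E. \<forall>y\<in>E. x \<noteq> y \<longrightarrow> eps < bowen_dist T F x y)"

lemma sep_num_eq_Sup: "sep_num T Z F eps = Sup {card E |E. E \<subseteq> Z \<and> bowen_separated T F eps E}"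
  unfolding sep_num_def bowen_separated_def by simp

lemma bowen_separated_subset: "bowen_separated T F eps E \<Longrightarrow> E' \<subseteq> E \<Longrightarrow> bowen_separated T F eps E'"
  unfolding bowen_separated_def by (meson finite_subset subsetD)

lemma bowen_separated_singleton: "bowen_separated T F eps {x}"
  unfolding bowen_separated_def by simp

locale compact_system =
  fixes X :: "'a::metric_space set" and T :: "'g \<Rightarrow> 'a \<Rightarrow> 'a"
  assumes compact: "compact X" and maps_into: "\<And>g x. x \<in> X \<Longrightarrow> T g x \<in> X"
begin

text \<open>Points whose orbits are quantised identically along \<open>F\<close> are \<open>2r\<close>-close in \<open>d\<^sub>F\<close>,
  so an \<open>eps\<close>-separated set injects into the quantisations with \<open>r = eps/2\<close>.\<close>
lemma card_bowen_separated_bounded: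
  assumes "eps > 0" "finite F" "F \<noteq> {}"
  obtains N where "\<And>E. E \<subseteq> X \<Longrightarrow> bowen_separated T F eps E \<Longrightarrow> card E \<le> N"
proof -
  obtain k q where k: "finite (k :: 'a set)" "\<And>y. y \<in> X \<Longrightarrow> q y \<in> k"
    "\<And>y z. y \<in> X \<Longrightarrow> z \<in> X \<Longrightarrow> q y = q z \<Longrightarrow> dist y z < 2 * (eps/2)"
    using compact_quantizer[OF compact half_gt_zero[OF assms(1)]] by blast
  have "card E \<le> card (PiE F (\<lambda>_. k))" if E: "E \<subseteq> X" "bowen_separated T F eps E" for E
  proof (rule card_inj_on_le)
    show "(\<lambda>x. restrict (\<lambda>g. q (T g x)) F) ` E \<subseteq> PiE F (\<lambda>_. k)"
      using E(1) k(2) maps_into by auto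
    show "inj_on (\<lambda>x. restrict (\<lambda>g. q (T g x)) F) E"
    proof (rule inj_onI, rule ccontr)
      fix x y assume xy: "x \<in> E" "y \<in> E" "restrict (\<lambda>g. q (T g x)) F = restrict (\<lambda>g. q (T g y)) F" "x \<noteq> y"
      have "dist (T g x) (T g y) < eps" if "g \<in> F" for g
      proof -
        have "q (T g x) = q (T g y)"
          using fun_cong[OF xy(3), of g] that by simp
        moreover have "T g x \<in> X" "T g y \<in> X"
          using xy(1,2) E(1) maps_into by auto
        ultimately show ?thesis
          using k(3) by simp
      qed
      then have "bowen_dist T F x y < eps"
        using bowen_dist_less_iff[OF assms(2,3)] by blast
      with E(2) xy show False
        unfolding bowen_separated_def by fastforce
    qed
  qed (use assms(2) k(1) in \<open>auto intro: finite_PiE\<close>)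
  then show ?thesis
    using that by blast
qed

context
  fixes Z :: "'a set" and F :: "'g set" and eps :: real
  assumes Z: "Z \<subseteq> X" and F: "finite F" "F \<noteq> {}" and eps: "eps > 0"
begin

lemma finite_separated_cards: "finite {card E |E. E \<subseteq> Z \<and> bowen_separated T F eps E}"
proof -
  obtain N where "\<And>E. E \<subseteq> X \<Longrightarrow> bowen_separated T F eps E \<Longrightarrow> card E \<le> N"
    using card_bowen_separated_bounded[OF eps F] by blast
  then show ?thesis
    using Z by (intro finite_nat_set_iff_bounded_le[THEN iffD2]) blast
qed

lemma card_le_sep_num: "E \<subseteq> Z \<Longrightarrow> bowen_separated T F eps E \<Longrightarrow> card E \<le> sep_num T Z F eps"
  unfolding sep_num_eq_Sup by (rule le_cSup_finite[OF finite_separated_cards]) blast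

lemma sep_num_attained:
  obtains E where "E \<subseteq> Z" "bowen_separated T F eps E" "card E = sep_num T Z F eps"
proof -
  define S where "S = {card E |E. E \<subseteq> Z \<and> bowen_separated T F eps E}"
  have "{} \<subseteq> Z \<and> bowen_separated T F eps {}"
    unfolding bowen_separated_def by simp
  then have "S \<noteq> {}"
    unfolding S_def by blast
  then have "Sup S \<in> S"
    using finite_separated_cards unfolding S_def[symmetric] by (simp add: cSup_eq_Max)
  then have "\<exists>E. Sup S = card E \<and> E \<subseteq> Z \<and> bowen_separated T F eps E"
    by (simp add: S_def)
  moreover have "sep_num T Z F eps = Sup S"
    unfolding sep_num_eq_Sup S_def ..
  ultimately show ?thesis
    using that by auto
qed

lemma sep_num_pos: "Z \<noteq> {} \<Longrightarrow> 1 \<le> sep_num T Z F eps"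
  using card_le_sep_num[OF _ bowen_separated_singleton] by fastforce

end

lemma sep_num_Un:
  assumes "Z1 \<subseteq> X" "Z2 \<subseteq> X" "finite F" "F \<noteq> {}" "eps > 0"
  shows "sep_num T (Z1 \<union> Z2) F eps \<le> sep_num T Z1 F eps + sep_num T Z2 F eps"
proof -
  have "Z1 \<union> Z2 \<subseteq> X"
    using assms(1,2) by blast
  then obtain E where E: "E \<subseteq> Z1 \<union> Z2" "bowen_separated T F eps E" "card E = sep_num T (Z1 \<union> Z2) F eps"
    by (rule sep_num_attained[OF _ assms(3-5)])
  have "card E = card (E \<inter> Z1) + card (E - Z1)"
    using E(2) unfolding bowen_separated_def by (metis card_Int_Diff)
  also have "\<dots> \<le> sep_num T Z1 F eps + sep_num T Z2 F eps"
    using E assms by (intro add_mono card_le_sep_num bowen_separated_subset[OF E(2)]) auto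
  finally show ?thesis
    using E(3) by simp
qed

text \<open>Refining the window from \<open>F\<close> to \<open>F'\<close> costs at most a factor \<open>N\<close> per element of \<open>F' - F\<close>,
  where \<open>N\<close> depends on \<open>eps\<close> only: an \<open>eps\<close>-separated set for \<open>F'\<close> injects into pairs consisting of
  a nearby point of a maximal \<open>eps/2\<close>-separated set for \<open>F\<close> and the quantised orbit along \<open>F' - F\<close>.\<close>
lemma sep_num_change_window:
  assumes "eps > 0"
  obtains N :: nat where "N \<ge> 1" and "\<And>K F F'. K \<subseteq> X \<Longrightarrow> finite F \<Longrightarrow> F \<noteq> {} \<Longrightarrow> finite F' \<Longrightarrow> F' \<noteq> {} \<Longrightarrow>
      sep_num T K F' eps \<le> sep_num T K F (eps/2) * N ^ card (F' - F)"
proof -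
  obtain k q where k: "finite (k :: 'a set)" "\<And>y. y \<in> X \<Longrightarrow> q y \<in> k"
    "\<And>y z. y \<in> X \<Longrightarrow> z \<in> X \<Longrightarrow> q y = q z \<Longrightarrow> dist y z < 2 * (eps/2)"
    using compact_quantizer[OF compact half_gt_zero[OF assms(1)]] by blast
  have main: "sep_num T K F' eps \<le> sep_num T K F (eps/2) * card k ^ card (F' - F)"
    if K: "K \<subseteq> X" and F: "finite F" "F \<noteq> {}" and F': "finite F'" "F' \<noteq> {}" for K F F'
  proof -
    obtain E where E: "E \<subseteq> K" "bowen_separated T F' eps E" "card E = sep_num T K F' eps"
      by (rule sep_num_attained[OF K F' assms])
    obtain E0 where E0: "E0 \<subseteq> K" "bowen_separated T F (eps/2) E0" "card E0 = sep_num T K F (eps/2)"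
      by (rule sep_num_attained[OF K F half_gt_zero[OF assms]])
    have "\<exists>e\<in>E0. bowen_dist T F a e \<le> eps/2" if a: "a \<in> K" for a
    proof (rule ccontr)
      assume far: "\<not> (\<exists>e\<in>E0. bowen_dist T F a e \<le> eps/2)"
      then have "a \<notin> E0"
        using bowen_dist_self[OF F, of T a] assms by force
      moreover have "bowen_separated T F (eps/2) (insert a E0)"
        unfolding bowen_separated_def
      proof (intro conjI ballI impI)
        show "finite (insert a E0)"
          using E0(2) unfolding bowen_separated_def by simp
        fix x y assume "x \<in> insert a E0" "y \<in> insert a E0" "x \<noteq> y"
        then show "eps/2 < bowen_dist T F x y"
          using E0(2) far bowen_dist_commute[of T F x a] unfolding bowen_separated_def by (auto simp: not_le)
      qed
      then have "card (insert a E0) \<le> sep_num T K F (eps/2)"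
        using card_le_sep_num[OF K F, of "eps/2"] a E0(1) assms by simp
      ultimately show False
        using E0 unfolding bowen_separated_def by simp
    qed
    then obtain nr where nr: "\<And>a. a \<in> K \<Longrightarrow> nr a \<in> E0 \<and> bowen_dist T F a (nr a) \<le> eps/2"
      by metis
    define code where "code a = (nr a, restrict (\<lambda>h. q (T h a)) (F' - F))" for a
    have "card E \<le> card (E0 \<times> PiE (F' - F) (\<lambda>_. k))"
    proof (rule card_inj_on_le)
      show "code ` E \<subseteq> E0 \<times> PiE (F' - F) (\<lambda>_. k)"
      proof (rule image_subsetI)
        fix a assume "a \<in> E"
        then have "a \<in> X" "nr a \<in> E0"
          using E(1) K nr by auto
        moreover have "restrict (\<lambda>h. q (T h a)) (F' - F) \<in> PiE (F' - F) (\<lambda>_. k)"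
          unfolding restrict_PiE_iff using k(2) maps_into \<open>a \<in> X\<close> by blast
        ultimately show "code a \<in> E0 \<times> PiE (F' - F) (\<lambda>_. k)"
          unfolding code_def by simp
      qed
      show "inj_on code E"
      proof (rule inj_onI, rule ccontr)
        fix a b assume ab: "a \<in> E" "b \<in> E" "code a = code b" "a \<noteq> b"
        have "dist (T h a) (T h b) \<le> eps" if h: "h \<in> F'" for h
        proof (cases "h \<in> F")
          case True
          have "nr a = nr b"
            using ab(3) unfolding code_def by simp
          have "dist (T h a) (T h b) \<le> bowen_dist T F a b"
            by (rule dist_le_bowen_dist[OF F(1) True])
          also have "\<dots> \<le> bowen_dist T F a (nr a) + bowen_dist T F (nr b) b"
            using bowen_dist_triangle[OF F, where x=a and y="nr a" and z=b] \<open>nr a = nr b\<close> by simp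
          also have "\<dots> \<le> eps"
          proof -
            have "a \<in> K" "b \<in> K"
              using ab(1,2) E(1) by auto
            then show ?thesis
              using nr[of a] nr[of b] bowen_dist_commute[of T F "nr b" b] by simp
          qed
          finally show ?thesis .
        next
          case False
          then have "q (T h a) = q (T h b)"
            using fun_cong[OF arg_cong[OF ab(3), of snd], of h] h unfolding code_def by simp
          moreover have "T h a \<in> X" "T h b \<in> X"
            using ab(1,2) E(1) K maps_into by auto
          ultimately show ?thesis
            using k(3) by (simp add: less_imp_le)
        qed
        then have "bowen_dist T F' a b \<le> eps"
          using bowen_dist_le_iff[OF F'] by blast
        with E(2) ab show False
          unfolding bowen_separated_def by fastforce
      qed
      show "finite (E0 \<times> PiE (F' - F) (\<lambda>_. k))"
        using E0(2) k(1) F'(1) unfolding bowen_separated_def by (auto intro!: finite_PiE)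
    qed
    also have "\<dots> = card E0 * card k ^ card (F' - F)"
      using F'(1) by (simp add: card_cartesian_product card_PiE)
    finally show ?thesis
      using E(3) E0(3) by simp
  qed
  show ?thesis
  proof (cases "X = {}")
    case True
    then show ?thesis
      using that[of 1] by (simp add: sep_num_def bowen_separated_def)
  next
    case False
    then obtain y where "y \<in> X"
      by blast
    then have "card k \<ge> 1"
      using k(1) k(2)[of y] card_gt_0_iff[of k] by auto
    then show ?thesis
      using that main by blast
  qed
qed

end

section \<open>Metric mean dimension\<close>

lemma Limsup_le_if_eventually_less:
  fixes f :: "_ \<Rightarrow> ereal"
  assumes "\<And>r. c < ereal r \<Longrightarrow> eventually (\<lambda>x. f x < ereal r) F"
  shows "Limsup F f \<le> c"
proof (rule Limsup_le_iff[THEN iffD2], intro allI impI)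
  fix y assume "y > c"
  then obtain r where r: "c < ereal r" "ereal r < y"
    using ereal_dense2 by blast
  from assms[OF r(1)] show "eventually (\<lambda>x. f x < y) F"
    by eventually_elim (use r(2) in auto)
qed

lemma Limsup_max_le:
  fixes f g :: "_ \<Rightarrow> 'b::complete_linorder"
  shows "Limsup F (\<lambda>x. max (f x) (g x)) \<le> max (Limsup F f) (Limsup F g)"
proof (rule Limsup_le_iff[THEN iffD2], intro allI impI)
  fix y assume "max (Limsup F f) (Limsup F g) < y"
  then have "eventually (\<lambda>x. f x < y) F" "eventually (\<lambda>x. g x < y) F"
    by (auto intro: Limsup_lessD)
  then show "eventually (\<lambda>x. max (f x) (g x) < y) F"
    by eventually_elim simp
qed

lemma ereal_divide_less_ereal_iff: "L > 0 \<Longrightarrow> x / ereal L < ereal r \<longleftrightarrow> x < ereal (r * L)"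
  using ereal_divide_less_iff[of "ereal L" x "ereal r"] by simp

lemma max_divide_ereal:
  assumes "L > 0"
  shows "max a b / ereal L = max (a / ereal L) (b / ereal L)"
proof (cases "a \<le> b")
  case True
  then show ?thesis
    using assms by (simp add: max_absorb2)
next
  case False
  then have "b \<le> a"
    by simp
  then show ?thesis
    using assms by (simp add: max_absorb1)
qed

lemma eventually_at_right_0_less_1: "eventually (\<lambda>e. 0 < e \<and> e < (1::real)) (at_right 0)"
  by (subst eventually_at_right_field) (auto intro!: exI[of _ 1])

lemma eventually_ln_inverse_gt: "eventually (\<lambda>e. c < ln (1/e)) (at_right (0::real))"
proof (subst eventually_at_right_field, intro exI[of _ "exp (-c)"] conjI allI impI)
  fix e :: real assume "0 < e" "e < exp (-c)"
  then show "c < ln (1/e)"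
    using ln_less_cancel_iff[of e "exp (-c)"] by (simp add: ln_div)
qed simp

lemma eventually_at_right_0_half:
  assumes "eventually P (at_right (0::real))"
  shows "eventually (\<lambda>e. P (e/2)) (at_right 0)"
proof -
  obtain b where "b > 0" "\<And>y. 0 < y \<Longrightarrow> y < b \<Longrightarrow> P y"
    using assms unfolding eventually_at_right_field by auto
  then show ?thesis
    unfolding eventually_at_right_field by (intro exI[of _ b]) auto
qed

text \<open>The ratios \<open>h(e) / ln(1/e)\<close> defining the mean dimension are insensitive to additive constants
  and to replacing \<open>e\<close> by \<open>e/2\<close>, because \<open>ln(1/e) \<rightarrow> \<infinity>\<close>.\<close>

lemma Limsup_mdim_ratio_add_const:
  fixes h :: "real \<Rightarrow> ereal"
  shows "Limsup (at_right 0) (\<lambda>e. (ereal c + h e) / ereal (ln (1/e)))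
    \<le> Limsup (at_right 0) (\<lambda>e. h e / ereal (ln (1/e)))"
proof (rule Limsup_le_if_eventually_less)
  fix r assume "Limsup (at_right 0) (\<lambda>e. h e / ereal (ln (1/e))) < ereal r"
  then obtain r1 where r1: "Limsup (at_right 0) (\<lambda>e. h e / ereal (ln (1/e))) < ereal r1" "ereal r1 < ereal r"
    using ereal_dense2 by blast
  note ev = Limsup_lessD[OF r1(1)] eventually_at_right_0_less_1 eventually_ln_inverse_gt[of "c / (r - r1)"]
  show "eventually (\<lambda>e. (ereal c + h e) / ereal (ln (1/e)) < ereal r) (at_right 0)"
    using ev
  proof eventually_elim
    case (elim e)
    define L where "L = ln (1/e)"
    have L: "L > 0"
      using elim(2) unfolding L_def by simp
    have "h e < ereal (r1 * L)"
      using elim(1) ereal_divide_less_ereal_iff[OF L] unfolding L_def by simp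
    then have "ereal c + h e < ereal (c + r1 * L)"
      by (cases "h e") auto
    also have "c + r1 * L < r * L"
      using elim(3) r1(2) unfolding L_def by (simp add: divide_less_eq algebra_simps)
    then have "ereal (c + r1 * L) < ereal (r * L)"
      by simp
    finally have "ereal c + h e < ereal (r * L)" .
    then show ?case
      using ereal_divide_less_ereal_iff[OF L] unfolding L_def by simp
  qed
qed

lemma Limsup_mdim_ratio_le_max:
  fixes h h1 h2 :: "real \<Rightarrow> ereal"
  assumes "eventually (\<lambda>e. h e \<le> ereal c + max (h1 e) (h2 e)) (at_right 0)"
  shows "Limsup (at_right 0) (\<lambda>e. h e / ereal (ln (1/e)))
    \<le> max (Limsup (at_right 0) (\<lambda>e. h1 e / ereal (ln (1/e)))) (Limsup (at_right 0) (\<lambda>e. h2 e / ereal (ln (1/e))))"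
proof -
  have "Limsup (at_right 0) (\<lambda>e. h e / ereal (ln (1/e)))
      \<le> Limsup (at_right 0) (\<lambda>e. (ereal c + max (h1 e) (h2 e)) / ereal (ln (1/e)))"
    using assms eventually_at_right_0_less_1
    by (intro Limsup_mono, eventually_elim) (intro ereal_divide_right_mono, auto)
  also have "\<dots> \<le> Limsup (at_right 0) (\<lambda>e. max (h1 e) (h2 e) / ereal (ln (1/e)))"
    by (rule Limsup_mdim_ratio_add_const)
  also have "\<dots> = Limsup (at_right 0) (\<lambda>e. max (h1 e / ereal (ln (1/e))) (h2 e / ereal (ln (1/e))))"
    using eventually_at_right_0_less_1
    by (intro Limsup_eq, eventually_elim) (simp add: max_divide_ereal)
  also have "\<dots> \<le> max (Limsup (at_right 0) (\<lambda>e. h1 e / ereal (ln (1/e)))) (Limsup (at_right 0) (\<lambda>e. h2 e / ereal (ln (1/e))))"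
    by (rule Limsup_max_le)
  finally show ?thesis .
qed

lemma Limsup_mdim_ratio_half:
  fixes h h' :: "real \<Rightarrow> ereal"
  assumes "eventually (\<lambda>e. h e \<le> h' (e/2)) (at_right 0)"
  shows "Limsup (at_right 0) (\<lambda>e. h e / ereal (ln (1/e))) \<le> Limsup (at_right 0) (\<lambda>e. h' e / ereal (ln (1/e)))"
proof -
  have "Limsup (at_right 0) (\<lambda>e. h e / ereal (ln (1/e))) \<le> Limsup (at_right 0) (\<lambda>e. h' (e/2) / ereal (ln (1/e)))"
    using assms eventually_at_right_0_less_1
    by (intro Limsup_mono, eventually_elim) (intro ereal_divide_right_mono, auto)
  also have "\<dots> \<le> Limsup (at_right 0) (\<lambda>e. h' e / ereal (ln (1/e)))"
  proof (rule Limsup_le_if_eventually_less)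
    fix r assume "Limsup (at_right 0) (\<lambda>e. h' e / ereal (ln (1/e))) < ereal r"
    then obtain r1 where r1: "Limsup (at_right 0) (\<lambda>e. h' e / ereal (ln (1/e))) < ereal r1" "ereal r1 < ereal r"
      using ereal_dense2 by blast
    note ev = eventually_at_right_0_half[OF Limsup_lessD[OF r1(1)]] eventually_at_right_0_less_1
      eventually_ln_inverse_gt[of "\<bar>r1\<bar> * ln 2 / (r - r1)"]
    show "eventually (\<lambda>e. h' (e/2) / ereal (ln (1/e)) < ereal r) (at_right 0)"
      using ev
    proof eventually_elim
      case (elim e)
      define L where "L = ln (1/e)"
      have L: "L > 0"
        using elim(2) unfolding L_def by simp
      have L2: "0 < ln 2 + L"
        using L by (simp add: add_pos_pos)
      have "ln (1 / (e/2)) = ln 2 + L"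
        using elim(2) unfolding L_def by (simp add: ln_div)
      then have "h' (e/2) < ereal (r1 * (ln 2 + L))"
        using elim(1) ereal_divide_less_ereal_iff[OF L2] by simp
      moreover have "r1 * (ln 2 + L) < r * L"
      proof -
        have "\<bar>r1\<bar> * ln 2 < (r - r1) * L"
          using elim(3) r1(2) unfolding L_def by (simp add: divide_less_eq mult.commute)
        moreover have "r1 * ln 2 \<le> \<bar>r1\<bar> * ln 2"
          by (intro mult_right_mono) auto
        ultimately show ?thesis
          unfolding distrib_left left_diff_distrib by linarith
      qed
      ultimately have "h' (e/2) < ereal (r * L)"
        by (metis less_ereal.simps(1) less_trans)
      then show ?case
        using ereal_divide_less_ereal_iff[OF L] unfolding L_def by simp
    qed
  qed
  finally show ?thesis .
qed

lemma ln_le_ln2_plus_max: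
  fixes s s1 s2 :: nat and c :: real
  assumes "1 \<le> s1" "1 \<le> s2" "s \<le> s1 + s2" "1 \<le> s" "1 \<le> c"
  shows "ln s / c \<le> ln 2 + max (ln s1 / c) (ln s2 / c)"
proof -
  define m where "m = max s1 s2"
  have "real s \<le> 2 * real m"
    using assms(3) unfolding m_def by (simp add: max_def)
  moreover have "1 \<le> m"
    using assms(1) unfolding m_def by simp
  ultimately have "ln s \<le> ln (2 * real m)"
    using assms(4) by (subst ln_le_cancel_iff) auto
  also have "\<dots> = ln 2 + ln m"
    using \<open>1 \<le> m\<close> by (simp add: ln_mult)
  finally have "ln s \<le> ln 2 + ln m" .
  then have "ln s / c \<le> ln 2 / c + ln m / c"
    using assms(5) by (simp add: divide_right_mono add_divide_distrib[symmetric])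
  also have "ln 2 / c \<le> ln 2"
    using assms(5) by (simp add: divide_le_eq)
  also have "ln m / c \<le> max (ln s1 / c) (ln s2 / c)"
    unfolding m_def by (cases "s1 \<le> s2") (auto simp: max_def)
  finally show ?thesis
    by simp
qed

context compact_system
begin

context
  fixes F :: "nat \<Rightarrow> 'g set"
  assumes F_finite: "\<And>n. finite (F n)" and F_nonempty: "\<And>n. F n \<noteq> {}"
begin

lemma htop_eps_Un:
  assumes "Z1 \<subseteq> X" "Z2 \<subseteq> X" "Z1 \<noteq> {}" "Z2 \<noteq> {}" "eps > 0"
  shows "htop_eps T (Z1 \<union> Z2) F eps \<le> ereal (ln 2) + max (htop_eps T Z1 F eps) (htop_eps T Z2 F eps)"
proof -
  define a where "a Z n = ereal (ln (real (sep_num T Z (F n) eps)) / real (card (F n)))" for Z n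
  have "a (Z1 \<union> Z2) n \<le> ereal (ln 2) + max (a Z1 n) (a Z2 n)" for n
  proof -
    have "1 \<le> real (card (F n))"
      using F_finite F_nonempty by (simp add: Suc_leI card_gt_0_iff)
    moreover have "1 \<le> sep_num T Z1 (F n) eps" "1 \<le> sep_num T Z2 (F n) eps"
      "1 \<le> sep_num T (Z1 \<union> Z2) (F n) eps"
      using sep_num_pos[OF _ F_finite F_nonempty assms(5)] assms(1-4) by auto
    ultimately have "ln (sep_num T (Z1 \<union> Z2) (F n) eps) / real (card (F n))
        \<le> ln 2 + max (ln (sep_num T Z1 (F n) eps) / real (card (F n))) (ln (sep_num T Z2 (F n) eps) / real (card (F n)))"
      by (intro ln_le_ln2_plus_max sep_num_Un[OF assms(1,2) F_finite F_nonempty assms(5)])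
    then show ?thesis
      unfolding a_def by (simp del: ereal_max add: ereal_max[symmetric])
  qed
  then have "limsup (a (Z1 \<union> Z2)) \<le> limsup (\<lambda>n. ereal (ln 2) + max (a Z1 n) (a Z2 n))"
    by (intro Limsup_mono) simp
  also have "\<dots> = ereal (ln 2) + limsup (\<lambda>n. max (a Z1 n) (a Z2 n))"
    by (rule Limsup_add_ereal_left) simp_all
  also have "\<dots> \<le> ereal (ln 2) + max (limsup (a Z1)) (limsup (a Z2))"
    by (intro add_left_mono Limsup_max_le)
  finally show ?thesis
    unfolding htop_eps_def a_def .
qed

lemma umdim_M_Un:
  assumes "Z1 \<subseteq> X" "Z2 \<subseteq> X" "Z1 \<noteq> {}" "Z2 \<noteq> {}"
  shows "umdim_M T (Z1 \<union> Z2) F \<le> max (umdim_M T Z1 F) (umdim_M T Z2 F)"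
  unfolding umdim_M_def
proof (rule Limsup_mdim_ratio_le_max[where c = "ln 2"])
  show "eventually (\<lambda>e. htop_eps T (Z1 \<union> Z2) F e \<le> ereal (ln 2) + max (htop_eps T Z1 F e) (htop_eps T Z2 F e))
      (at_right 0)"
    using eventually_at_right_0_less_1 by eventually_elim (rule htop_eps_Un[OF assms], simp)
qed

lemma umdim_M_Union_less:
  assumes "finite S" "S \<noteq> {}" "\<And>K. K \<in> S \<Longrightarrow> K \<subseteq> X \<and> K \<noteq> {} \<and> umdim_M T K F < c"
  shows "umdim_M T (\<Union>S) F < c"
  using assms
proof (induction S rule: finite_ne_induct)
  case (singleton K)
  show ?case
    using singleton.prems[of K] by simp
next
  case (insert K S)
  have K: "K \<subseteq> X" "K \<noteq> {}" "umdim_M T K F < c"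
    using insert.prems by blast+
  have S: "\<Union>S \<subseteq> X" "\<Union>S \<noteq> {}" "umdim_M T (\<Union>S) F < c"
    using insert.prems insert.hyps(2) insert.IH by blast+
  have "umdim_M T (K \<union> \<Union>S) F \<le> max (umdim_M T K F) (umdim_M T (\<Union>S) F)"
    using K S by (intro umdim_M_Un)
  also have "\<dots> < c"
    using K(3) S(3) by simp
  finally show ?case
    by simp
qed

end

end

definition closed_nhds :: "'a::topological_space set \<Rightarrow> 'a \<Rightarrow> 'a set set" where
  "closed_nhds X x = {K. K \<subseteq> X \<and> closed K \<and> (\<exists>U. open U \<and> x \<in> U \<and> U \<inter> X \<subseteq> K)}"

lemma local_umdim_M_eq_INF: "local_umdim_M X T F x = (INF K \<in> closed_nhds X x. umdim_M T K F)"
  unfolding local_umdim_M_def closed_nhds_def ..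

lemma local_umdim_M_le_umdim_M: "closed X \<Longrightarrow> local_umdim_M X T F x \<le> umdim_M T X F"
  unfolding local_umdim_M_eq_INF closed_nhds_def by (rule INF_lower) auto

text \<open>The local mean dimension is upper semicontinuous: a closed neighbourhood of a limit point
  is also a closed neighbourhood of the points of the sequence that eventually lie in its interior.\<close>
lemma closed_local_umdim_M_ge:
  assumes "closed X"
  shows "closed {x \<in> X. c \<le> local_umdim_M X T F x}"
proof -
  have "l \<in> {x \<in> X. c \<le> local_umdim_M X T F x}"
    if xs: "\<And>n. xs n \<in> X" "\<And>n. c \<le> local_umdim_M X T F (xs n)" and l: "xs \<longlonglongrightarrow> l" for xs l
  proof -
    have "c \<le> umdim_M T K F" if K: "K \<in> closed_nhds X l" for K
    proof -
      from K obtain U where U: "open U" "l \<in> U" "U \<inter> X \<subseteq> K"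
        unfolding closed_nhds_def by auto
      have "eventually (\<lambda>n. xs n \<in> U) sequentially"
        using l U(1,2) by (rule topological_tendstoD)
      then obtain n where "xs n \<in> U"
        by (auto simp: eventually_sequentially)
      then have "K \<in> closed_nhds X (xs n)"
        using K U unfolding closed_nhds_def by auto
      then have "local_umdim_M X T F (xs n) \<le> umdim_M T K F"
        unfolding local_umdim_M_eq_INF by (rule INF_lower)
      with xs(2) show ?thesis
        by (rule order.trans)
    qed
    moreover have "l \<in> X"
      using closed_sequentially[OF assms] xs(1) l by blast
    ultimately show ?thesis
      unfolding local_umdim_M_eq_INF by (auto intro: INF_greatest)
  qed
  then show ?thesis
    unfolding closed_sequential_limits by blast
qed

text \<open>Otherwise every point has a closed neighbourhood of strictly smaller mean dimension, and
  finitely many of them cover \<open>X\<close>.\<close>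
lemma (in compact_system) local_umdim_M_attains_umdim_M:
  assumes "X \<noteq> {}" "\<And>n. finite (F n)" "\<And>n. F n \<noteq> {}"
  shows "\<exists>x\<in>X. local_umdim_M X T F x = umdim_M T X F"
proof (rule ccontr)
  assume "\<not> (\<exists>x\<in>X. local_umdim_M X T F x = umdim_M T X F)"
  then have "local_umdim_M X T F x < umdim_M T X F" if "x \<in> X" for x
    using local_umdim_M_le_umdim_M[OF compact_imp_closed[OF compact], of T F x] that
    by (simp add: order.order_iff_strict)
  then have "\<forall>x\<in>X. \<exists>K. K \<in> closed_nhds X x \<and> umdim_M T K F < umdim_M T X F"
    unfolding local_umdim_M_eq_INF INF_less_iff by blast
  then obtain K where K: "\<forall>x\<in>X. K x \<in> closed_nhds X x \<and> umdim_M T (K x) F < umdim_M T X F"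
    by (rule bchoice[THEN exE])
  then have "\<forall>x\<in>X. \<exists>U. open U \<and> x \<in> U \<and> U \<inter> X \<subseteq> K x"
    unfolding closed_nhds_def by blast
  then obtain U where U: "\<forall>x\<in>X. open (U x) \<and> x \<in> U x \<and> U x \<inter> X \<subseteq> K x"
    by (rule bchoice[THEN exE])
  have "\<And>x. x \<in> X \<Longrightarrow> open (U x)" "X \<subseteq> (\<Union>x\<in>X. U x)"
    using U by blast+
  then obtain D where D: "D \<subseteq> X" "finite D" "X \<subseteq> (\<Union>x\<in>D. U x)"
    by (rule compactE_image[OF compact])
  have KX: "x \<in> K x" "K x \<subseteq> X" if "x \<in> X" for x
    using K U that unfolding closed_nhds_def by blast+
  have "X = \<Union>(K ` D)"
  proof
    show "X \<subseteq> \<Union>(K ` D)"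
      using D U by blast
    show "\<Union>(K ` D) \<subseteq> X"
      using D(1) KX(2) by blast
  qed
  moreover have "umdim_M T (\<Union>(K ` D)) F < umdim_M T X F"
  proof (rule umdim_M_Union_less[OF assms(2,3)])
    show "finite (K ` D)"
      using D(2) by simp
    show "K ` D \<noteq> {}"
      using D(3) assms(1) by blast
    fix K' assume "K' \<in> K ` D"
    then obtain x where "x \<in> X" "K' = K x"
      using D(1) by blast
    then show "K' \<subseteq> X \<and> K' \<noteq> {} \<and> umdim_M T K' F < umdim_M T X F"
      using K KX by blast
  qed
  ultimately show False
    by simp
qed

section \<open>Translation invariance of the local mean dimension\<close>

lemma finite_right_transl: "finite F \<Longrightarrow> finite (right_transl F g)"
  and right_transl_nonempty: "F \<noteq> {} \<Longrightarrow> right_transl F g \<noteq> {}"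
  unfolding right_transl_def by auto

lemma ln_le_of_le_mult_pow:
  fixes s s0 N m :: nat
  assumes "s \<le> s0 * N ^ m" "1 \<le> s" "1 \<le> N" "real m \<le> D"
  shows "ln s \<le> ln s0 + D * ln N"
proof -
  have "1 \<le> s0"
    using assms(1,2) by (cases "s0 = 0") auto
  have "real s \<le> real (s0 * N ^ m)"
    using assms(1) by (simp only: of_nat_le_iff)
  then have "ln (real s) \<le> ln (real s0 * real N ^ m)"
    using assms(2,3) by (subst ln_le_cancel_iff) auto
  also have "\<dots> = ln s0 + m * ln N"
    using assms(3) \<open>1 \<le> s0\<close> by (simp add: ln_mult ln_realpow)
  also have "\<dots> \<le> ln s0 + D * ln N"
    using assms(3,4) by (intro add_left_mono mult_right_mono) auto
  finally show ?thesis .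
qed

locale group_system =
  fixes X :: "'a::metric_space set" and T :: "'g::group_add \<Rightarrow> 'a \<Rightarrow> 'a"
  assumes G_system: "G_system X T"
begin

sublocale compact_system
  using G_system unfolding G_system_def compact_system_def by blast

lemma continuous_act: "continuous_on X (T g)"
  and act_add: "x \<in> X \<Longrightarrow> T (g + h) x = T g (T h x)"
  using G_system unfolding G_system_def by blast+

lemma act_neg_act: "x \<in> X \<Longrightarrow> T (-g) (T g x) = x"
  and act_act_neg: "x \<in> X \<Longrightarrow> T g (T (-g) x) = x"
  using G_system act_add[of x "-g" g] act_add[of x g "-g"] unfolding G_system_def by auto

lemma bowen_dist_act:
  assumes "a \<in> X" "b \<in> X"
  shows "bowen_dist T F (T g a) (T g b) = bowen_dist T (right_transl F g) a b"
proof -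
  have "(\<lambda>h. dist (T h (T g a)) (T h (T g b))) ` F = (\<lambda>h. dist (T h a) (T h b)) ` ((\<lambda>h. h + g) ` F)"
    using act_add assms by (auto simp: image_image)
  then show ?thesis
    unfolding bowen_dist_def right_transl_def by simp
qed

lemma sep_num_image_le:
  assumes "K \<subseteq> X" "finite F" "F \<noteq> {}" "eps > 0"
  shows "sep_num T (T g ` K) F eps \<le> sep_num T K (right_transl F g) eps"
proof -
  have "T g ` K \<subseteq> X"
    using assms(1) maps_into by auto
  then obtain E where E: "E \<subseteq> T g ` K" "bowen_separated T F eps E" "card E = sep_num T (T g ` K) F eps"
    by (rule sep_num_attained[OF _ assms(2-4)])
  then obtain E' where E': "E' \<subseteq> K" "inj_on (T g) E'" "E = T g ` E'"
    using subset_image_inj[of E "T g" K] by blast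
  have "bowen_separated T (right_transl F g) eps E'"
    unfolding bowen_separated_def
  proof (intro conjI ballI impI)
    show "finite E'"
      using E(2) finite_image_iff[OF E'(2)] E'(3) unfolding bowen_separated_def by simp
    fix a b assume ab: "a \<in> E'" "b \<in> E'" "a \<noteq> b"
    have "T g a \<noteq> T g b"
      by (rule inj_on_contraD[OF E'(2) ab(3) ab(1,2)])
    moreover have "T g a \<in> E" "T g b \<in> E"
      using E'(3) ab(1,2) by auto
    ultimately have "eps < bowen_dist T F (T g a) (T g b)"
      using E(2) unfolding bowen_separated_def by blast
    moreover have "a \<in> X" "b \<in> X"
      using ab(1,2) E'(1) assms(1) by auto
    ultimately show "eps < bowen_dist T (right_transl F g) a b"
      by (simp add: bowen_dist_act)
  qed
  then have "card E' \<le> sep_num T K (right_transl F g) eps"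
    by (rule card_le_sep_num[OF assms(1) finite_right_transl[OF assms(2)] right_transl_nonempty[OF assms(3)] assms(4) E'(1)])
  moreover have "card E = card E'"
    using E'(2,3) card_image by blast
  ultimately show ?thesis
    using E(3) by simp
qed

text \<open>Moving \<open>K\<close> by \<open>g\<close> amounts to moving the window \<open>F\<^sub>n\<close> to \<open>F\<^sub>n g\<close>, which by the right Folner
  property differs from \<open>F\<^sub>n\<close> in \<open>o(|F\<^sub>n|)\<close> elements; each of them costs a bounded factor at scale \<open>eps/2\<close>.\<close>
lemma htop_eps_image_le:
  assumes "K \<subseteq> X" "K \<noteq> {}" "eps > 0" "\<And>n. finite (F n)" "\<And>n. F n \<noteq> {}"
    and right_folner: "(\<lambda>n. real (card (symdiff (right_transl (F n) g) (F n))) / real (card (F n))) \<longlonglongrightarrow> 0"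
  shows "htop_eps T (T g ` K) F eps \<le> htop_eps T K F (eps/2)"
proof -
  obtain N where N: "N \<ge> 1" and window: "\<And>K F F'. K \<subseteq> X \<Longrightarrow> finite F \<Longrightarrow> F \<noteq> {} \<Longrightarrow> finite F' \<Longrightarrow> F' \<noteq> {} \<Longrightarrow>
      sep_num T K F' eps \<le> sep_num T K F (eps/2) * N ^ card (F' - F)"
    using sep_num_change_window[OF assms(3)] by blast
  define d where "d n = real (card (symdiff (right_transl (F n) g) (F n))) / real (card (F n))" for n
  define a where "a n = ln (sep_num T K (F n) (eps/2)) / real (card (F n))" for n
  have "ln (sep_num T (T g ` K) (F n) eps) / real (card (F n)) \<le> a n + d n * ln N" for n
  proof -
    let ?F' = "right_transl (F n) g"
    have fin: "finite ?F'" "?F' \<noteq> {}"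
      using finite_right_transl[OF assms(4)] right_transl_nonempty[OF assms(5)] by blast+
    have "sep_num T (T g ` K) (F n) eps \<le> sep_num T K ?F' eps"
      by (rule sep_num_image_le[OF assms(1) assms(4,5) assms(3)])
    also have "\<dots> \<le> sep_num T K (F n) (eps/2) * N ^ card (?F' - F n)"
      by (rule window[OF assms(1) assms(4,5) fin])
    finally have bound: "sep_num T (T g ` K) (F n) eps \<le> sep_num T K (F n) (eps/2) * N ^ card (?F' - F n)" .
    have "T g ` K \<subseteq> X"
      using assms(1) maps_into by auto
    then have pos: "1 \<le> sep_num T (T g ` K) (F n) eps"
      by (rule sep_num_pos[OF _ assms(4,5) assms(3)]) (use assms(2) in blast)
    have "card (?F' - F n) \<le> card (symdiff ?F' (F n))"
      by (rule card_mono) (use fin(1) assms(4) in \<open>auto simp: symdiff_def\<close>)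
    then have "ln (sep_num T (T g ` K) (F n) eps)
        \<le> ln (sep_num T K (F n) (eps/2)) + real (card (symdiff ?F' (F n))) * ln N"
      by (intro ln_le_of_le_mult_pow[OF bound pos N]) simp
    then show ?thesis
      unfolding a_def d_def using assms(4,5)[of n]
      by (simp add: divide_right_mono add_divide_distrib[symmetric] card_gt_0_iff)
  qed
  then have "htop_eps T (T g ` K) F eps \<le> limsup (\<lambda>n. ereal (a n) + ereal (d n * ln N))"
    unfolding htop_eps_def by (intro Limsup_mono) simp
  also have "\<dots> \<le> limsup (\<lambda>n. ereal (a n)) + limsup (\<lambda>n. ereal (d n * ln N))"
    by (rule ereal_limsup_add_mono)
  also have "limsup (\<lambda>n. ereal (d n * ln N)) = 0"
  proof -
    have "(\<lambda>n. d n * ln N) \<longlonglongrightarrow> 0"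
      using right_folner unfolding d_def by (rule tendsto_mult_left_zero)
    then have "(\<lambda>n. ereal (d n * ln N)) \<longlonglongrightarrow> ereal 0"
      by (rule tendsto_ereal)
    then show ?thesis
      by (simp add: lim_imp_Limsup zero_ereal_def)
  qed
  finally show ?thesis
    unfolding htop_eps_def a_def by simp
qed

lemma umdim_M_image_le:
  assumes "K \<subseteq> X" "K \<noteq> {}" "\<And>n. finite (F n)" "\<And>n. F n \<noteq> {}"
    and "(\<lambda>n. real (card (symdiff (right_transl (F n) g) (F n))) / real (card (F n))) \<longlonglongrightarrow> 0"
  shows "umdim_M T (T g ` K) F \<le> umdim_M T K F"
  unfolding umdim_M_def
proof (rule Limsup_mdim_ratio_half)
  show "eventually (\<lambda>e. htop_eps T (T g ` K) F e \<le> htop_eps T K F (e/2)) (at_right 0)"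
    using eventually_at_right_0_less_1 by eventually_elim (rule htop_eps_image_le[OF assms(1,2) _ assms(3-5)], simp)
qed

lemma closed_nhds_image:
  assumes "x \<in> X" "K \<in> closed_nhds X x"
  shows "T g ` K \<in> closed_nhds X (T g x)"
proof -
  obtain U where K: "K \<subseteq> X" "closed K" "open U" "x \<in> U" "U \<inter> X \<subseteq> K"
    using assms(2) unfolding closed_nhds_def by blast
  have "compact K"
    using compact_Int_closed[OF compact K(2)] K(1) by (simp add: Int_absorb1)
  then have "closed (T g ` K)"
    using continuous_on_subset[OF continuous_act K(1)] by (intro compact_imp_closed compact_continuous_image)
  obtain V where V: "open V" "V \<inter> X = T (-g) -` U \<inter> X"
    using continuous_act[of "-g", unfolded continuous_on_open_invariant] K(3) by blast
  have "T g x \<in> V"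
    using V(2) maps_into[OF assms(1)] act_neg_act[OF assms(1)] K(4) by blast
  moreover have "V \<inter> X \<subseteq> T g ` K"
  proof
    fix y assume "y \<in> V \<inter> X"
    then have "T (-g) y \<in> K" "y = T g (T (-g) y)"
      using V(2) K(5) maps_into act_act_neg by auto
    then show "y \<in> T g ` K"
      by blast
  qed
  ultimately show ?thesis
    unfolding closed_nhds_def using K(1) maps_into \<open>closed (T g ` K)\<close> V(1) by blast
qed

lemma local_umdim_M_act_le:
  assumes "x \<in> X" "\<And>n. finite (F n)" "\<And>n. F n \<noteq> {}"
    and "(\<lambda>n. real (card (symdiff (right_transl (F n) g) (F n))) / real (card (F n))) \<longlonglongrightarrow> 0"
  shows "local_umdim_M X T F (T g x) \<le> local_umdim_M X T F x"
  unfolding local_umdim_M_eq_INF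
proof (rule INF_greatest)
  fix K assume K: "K \<in> closed_nhds X x"
  then have "K \<subseteq> X" "K \<noteq> {}"
    using assms(1) unfolding closed_nhds_def by auto
  then have "umdim_M T (T g ` K) F \<le> umdim_M T K F"
    using assms(2-4) by (rule umdim_M_image_le)
  then show "(INF K\<in>closed_nhds X (T g x). umdim_M T K F) \<le> umdim_M T K F"
    using closed_nhds_image[OF assms(1) K] by (rule INF_lower2[rotated])
qed

lemma local_umdim_M_act:
  assumes "x \<in> X" "two_sided_folner_seq F"
  shows "local_umdim_M X T F (T g x) = local_umdim_M X T F x"
proof -
  have F: "\<And>n. finite (F n)" "\<And>n. F n \<noteq> {}"
    "\<And>g. (\<lambda>n. real (card (symdiff (right_transl (F n) g) (F n))) / real (card (F n))) \<longlonglongrightarrow> 0"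
    using assms(2) unfolding two_sided_folner_seq_def folner_seq_def by auto
  have "local_umdim_M X T F x = local_umdim_M X T F (T (-g) (T g x))"
    using act_neg_act[OF assms(1)] by simp
  also have "\<dots> \<le> local_umdim_M X T F (T g x)"
    using maps_into[OF assms(1)] F by (rule local_umdim_M_act_le)
  finally show ?thesis
    using local_umdim_M_act_le[OF assms(1) F] by (simp add: antisym)
qed

end

section \<open>A Borel code of a compact metric space\<close>

definition cantor_code :: "(nat \<Rightarrow> bool) \<Rightarrow> real" where
  "cantor_code \<alpha> = (\<Sum>m. if \<alpha> m then 2 / 3 ^ Suc m else 0)"

lemma sums_cantor_weights: "(\<lambda>m. 2 / 3 ^ Suc (m + k) :: real) sums (1 / 3 ^ k)"
proof -
  have "(\<lambda>m. (2 / 3 ^ Suc k) * (1/3::real) ^ m) sums ((2 / 3 ^ Suc k) * (1 / (1 - 1/3)))"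
    by (intro sums_mult geometric_sums) simp
  then show ?thesis
    by (simp add: power_add power_one_over field_simps)
qed

lemma summable_cantor_code: "summable (\<lambda>m. if \<alpha> m then 2 / 3 ^ Suc m else 0 :: real)"
  using sums_cantor_weights[of 0] by (intro summable_comparison_test[OF _ sums_summable]) auto

lemma cantor_code_bounds: "0 \<le> cantor_code \<alpha>" "cantor_code \<alpha> \<le> 1"
proof -
  show "0 \<le> cantor_code \<alpha>"
    unfolding cantor_code_def by (rule suminf_nonneg[OF summable_cantor_code]) simp
  have "cantor_code \<alpha> \<le> (\<Sum>m. 2 / 3 ^ Suc m)"
    unfolding cantor_code_def using sums_cantor_weights[of 0]
    by (intro suminf_le summable_cantor_code) (auto simp: sums_iff)
  then show "cantor_code \<alpha> \<le> 1"
    using sums_cantor_weights[of 0] by (simp add: sums_iff)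
qed

text \<open>The first digit where \<open>\<alpha>\<close> and \<open>\<beta>\<close> differ contributes \<open>2/3\<^sup>j\<^sup>+\<^sup>1\<close>, while all later
  digits together contribute at most \<open>1/3\<^sup>j\<^sup>+\<^sup>1\<close>.\<close>
lemma cantor_code_gap:
  assumes "\<alpha> j \<noteq> \<beta> j" "\<And>m. m < j \<Longrightarrow> \<alpha> m = \<beta> m"
  shows "1 / 3 ^ Suc j \<le> \<bar>cantor_code \<alpha> - cantor_code \<beta>\<bar>"
proof -
  define d where "d m = (if \<alpha> m then 2 / 3 ^ Suc m else 0) - (if \<beta> m then 2 / 3 ^ Suc m else 0 :: real)" for m
  have "summable d"
    unfolding d_def by (intro summable_diff summable_cantor_code)
  have "cantor_code \<alpha> - cantor_code \<beta> = suminf d"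
    unfolding cantor_code_def d_def by (rule suminf_diff[OF summable_cantor_code summable_cantor_code])
  also have "\<dots> = (\<Sum>n. d (n + Suc j)) + sum d {..<Suc j}"
    by (rule suminf_split_initial_segment[OF \<open>summable d\<close>])
  also have "sum d {..<Suc j} = d j"
    using assms(2) unfolding d_def by (simp add: sum.neutral)
  finally have eq: "cantor_code \<alpha> - cantor_code \<beta> = (\<Sum>n. d (n + Suc j)) + d j" .
  have tail: "summable (\<lambda>n. 2 / 3 ^ Suc (n + Suc j) :: real)"
    using sums_cantor_weights by (rule sums_summable)
  have abs_d: "\<bar>d m\<bar> \<le> 2 / 3 ^ Suc m" for m
    unfolding d_def by auto
  have abs_tail: "summable (\<lambda>n. \<bar>d (n + Suc j)\<bar>)"
    by (rule summable_comparison_test'[OF tail]) (simp only: real_norm_def abs_abs abs_d)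
  have "\<bar>\<Sum>n. d (n + Suc j)\<bar> \<le> (\<Sum>n. \<bar>d (n + Suc j)\<bar>)"
    by (rule summable_rabs[OF abs_tail])
  also have "\<dots> \<le> (\<Sum>n. 2 / 3 ^ Suc (n + Suc j))"
    by (intro suminf_le abs_tail tail abs_d)
  also have "\<dots> = 1 / 3 ^ Suc j"
    by (rule sums_unique[OF sums_cantor_weights, symmetric])
  finally have "\<bar>\<Sum>n. d (n + Suc j)\<bar> \<le> 1 / 3 ^ Suc j" .
  moreover have "\<bar>d j\<bar> = 2 / 3 ^ Suc j"
    using assms(1) unfolding d_def by auto
  ultimately show ?thesis
    unfolding eq by linarith
qed

lemma cantor_code_sep:
  assumes "\<alpha> m \<noteq> \<beta> m" "m \<le> n"
  shows "1 / 3 ^ Suc n \<le> \<bar>cantor_code \<alpha> - cantor_code \<beta>\<bar>"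
proof -
  define j where "j = (LEAST j. \<alpha> j \<noteq> \<beta> j)"
  have "\<alpha> j \<noteq> \<beta> j"
    unfolding j_def by (rule LeastI[of _ m]) (rule assms(1))
  moreover have "\<And>i. i < j \<Longrightarrow> \<alpha> i = \<beta> i"
    unfolding j_def using not_less_Least by blast
  ultimately have "1 / 3 ^ Suc j \<le> \<bar>cantor_code \<alpha> - cantor_code \<beta>\<bar>"
    by (rule cantor_code_gap)
  have "j \<le> m"
    unfolding j_def by (rule Least_le) (rule assms(1))
  moreover have "1 / 3 ^ Suc n \<le> (1 / 3 ^ Suc j :: real)"
    using \<open>j \<le> m\<close> assms(2) by (intro divide_left_mono power_increasing) auto
  with \<open>1 / 3 ^ Suc j \<le> _\<close> show ?thesis
    by linarith
qed

text \<open>Encoding a point by its membership pattern in a sequence of closed sets that eventually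
  separates points uniformly gives a Borel map into \<open>[0,1]\<close> with a uniformly continuous inverse.
  For a compact space such a sequence enumerates finite nets of closed balls of radius \<open>1/(n+1)\<close>.\<close>
lemma compact_Borel_code:
  fixes X :: "'a::metric_space set"
  assumes "compact X" "X \<noteq> {}"
  obtains s :: "'a \<Rightarrow> real" where "s \<in> borel_measurable borel" "\<And>x. s x \<in> {0..1}"
    "\<And>\<epsilon>. \<epsilon> > 0 \<Longrightarrow> \<exists>\<delta>>0. \<forall>x\<in>X. \<forall>y\<in>X. \<bar>s x - s y\<bar> < \<delta> \<longrightarrow> dist x y < \<epsilon>"
proof -
  have "\<forall>n. \<exists>k. finite k \<and> k \<subseteq> X \<and> X \<subseteq> (\<Union>c\<in>k. ball c (1 / Suc n))"
    using seq_compact_imp_totally_bounded[OF compact_imp_seq_compact[OF assms(1)]] by simp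
  then obtain k where "\<forall>n. finite (k n) \<and> k n \<subseteq> X \<and> X \<subseteq> (\<Union>c\<in>k n. ball c (1 / Suc n))"
    by (rule choice[THEN exE])
  then have k: "\<And>n. finite (k n)" "\<And>n. k n \<subseteq> X" "\<And>n. X \<subseteq> (\<Union>c\<in>k n. ball c (1 / Suc n))"
    by blast+
  define Bs where "Bs = (\<Union>n. (\<lambda>c. cball c (1 / Suc n)) ` k n)"
  have "countable Bs"
    unfolding Bs_def using k(1) by (simp add: countable_finite)
  obtain x where "x \<in> X"
    using assms(2) by blast
  then have "k 0 \<noteq> {}"
    using k(3)[of 0] by blast
  then have "Bs \<noteq> {}"
    unfolding Bs_def by blast
  have B_onto: "\<exists>m. from_nat_into Bs m = b" if "b \<in> Bs" for b
    by (rule from_nat_into_surj[OF \<open>countable Bs\<close> that])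
  define B where "B = from_nat_into Bs"
  have B_closed: "closed (B m)" for m
    using from_nat_into[OF \<open>Bs \<noteq> {}\<close>, of m] unfolding B_def Bs_def by auto
  define s where "s x = cantor_code (\<lambda>m. x \<in> B m)" for x
  have "s \<in> borel_measurable borel"
    unfolding s_def cantor_code_def using B_closed
    by (intro borel_measurable_suminf measurable_If_set) auto
  moreover have "s x \<in> {0..1}" for x
    unfolding s_def using cantor_code_bounds by simp
  moreover have "\<exists>\<delta>>0. \<forall>x\<in>X. \<forall>y\<in>X. \<bar>s x - s y\<bar> < \<delta> \<longrightarrow> dist x y < \<epsilon>" if "\<epsilon> > 0" for \<epsilon>
  proof -
    obtain n :: nat where n: "2 / \<epsilon> < n"
      using reals_Archimedean2 by blast
    define r where "r = 1 / real (Suc n)"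
    have "2 * r < \<epsilon>"
      using n that unfolding r_def by (simp add: field_simps)
    have "cball c r \<in> Bs" if "c \<in> k n" for c
      unfolding Bs_def r_def using that by blast
    then have "\<forall>c\<in>k n. \<exists>m. B m = cball c r"
      unfolding B_def using B_onto by blast
    then obtain idx where "\<forall>c\<in>k n. B (idx c) = cball c r"
      by (rule bchoice[THEN exE])
    then have idx: "\<And>c. c \<in> k n \<Longrightarrow> B (idx c) = cball c r"
      by blast
    define J where "J = Max (idx ` k n)"
    have idx_le: "idx c \<le> J" if "c \<in> k n" for c
      unfolding J_def using k(1) that by simp
    have "dist x y < \<epsilon>" if xy: "x \<in> X" "y \<in> X" "\<bar>s x - s y\<bar> < 1 / 3 ^ Suc J" for x y
    proof -
      obtain c where c: "c \<in> k n" "dist c x < r"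
        using k(3)[of n] xy(1) unfolding r_def by auto
      then have "x \<in> B (idx c)"
        using idx by (simp add: dist_commute)
      moreover have "(x \<in> B (idx c)) = (y \<in> B (idx c))"
      proof (rule ccontr)
        assume "(x \<in> B (idx c)) \<noteq> (y \<in> B (idx c))"
        from cantor_code_sep[of "\<lambda>m. x \<in> B m" "idx c" "\<lambda>m. y \<in> B m" J, OF this idx_le[OF c(1)]]
        show False
          using xy(3) unfolding s_def by simp
      qed
      ultimately have "dist c y \<le> r"
        using idx[OF c(1)] by simp
      then have "dist x y < 2 * r"
        using c(2) dist_triangle[of x y c] dist_commute[of x c] by simp
      with \<open>2 * r < \<epsilon>\<close> show ?thesis
        by simp
    qed
    then show ?thesis
      by (intro exI[of _ "1 / 3 ^ Suc J"]) auto
  qed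
  ultimately show ?thesis
    using that by blast
qed

text \<open>Compactness of \<open>X\<close> replaces completeness in the usual extension theorem: a point \<open>y\<close>
  is a value at \<open>t\<close> if \<open>(t, y)\<close> adheres to the graph of \<open>s\<close>.\<close>
lemma compact_inverse_extends_to_closure:
  fixes s :: "'a::metric_space \<Rightarrow> 'b::metric_space"
  assumes "compact X"
    and modulus: "\<And>\<epsilon>. \<epsilon> > 0 \<Longrightarrow> \<exists>\<delta>>0. \<forall>x\<in>X. \<forall>y\<in>X. dist (s x) (s y) < \<delta> \<longrightarrow> dist x y < \<epsilon>"
  obtains p where "continuous_on (closure (s ` X)) p" "\<And>t. t \<in> closure (s ` X) \<Longrightarrow> p t \<in> X"
    "\<And>x. x \<in> X \<Longrightarrow> p (s x) = x"
proof -
  define value_at where "value_at t y \<longleftrightarrow> y \<in> X \<and> (\<forall>\<eta>>0. \<exists>x\<in>X. dist (s x) t < \<eta> \<and> dist x y < \<eta>)" for t y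
  have exists: "\<exists>y. value_at t y" if t: "t \<in> closure (s ` X)" for t
  proof -
    obtain ts where ts: "\<forall>n. ts n \<in> s ` X" "ts \<longlonglongrightarrow> t"
      using t unfolding closure_sequential by (elim exE conjE) simp
    have "\<forall>n. \<exists>x. x \<in> X \<and> ts n = s x"
      using ts(1) by (simp add: image_iff Bex_def)
    then obtain xs where xs: "\<forall>n. xs n \<in> X \<and> ts n = s (xs n)"
      by (rule choice[THEN exE])
    then have "ts = (\<lambda>n. s (xs n))"
      by auto
    then have xs: "\<forall>n. xs n \<in> X" "(\<lambda>n. s (xs n)) \<longlonglongrightarrow> t"
      using ts(2) xs by auto
    obtain y r where yr: "y \<in> X" "strict_mono r" "(xs \<circ> r) \<longlonglongrightarrow> y"
      by (rule seq_compactE[OF compact_imp_seq_compact[OF assms(1)] xs(1)])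
    have "(\<lambda>n. s (xs (r n))) \<longlonglongrightarrow> t"
      using LIMSEQ_subseq_LIMSEQ[OF xs(2) yr(2)] by (simp add: o_def)
    have "\<exists>x\<in>X. dist (s x) t < \<eta> \<and> dist x y < \<eta>" if \<eta>: "\<eta> > 0" for \<eta>
    proof -
      have "eventually (\<lambda>n. dist (s (xs (r n))) t < \<eta> \<and> dist (xs (r n)) y < \<eta>) sequentially"
        using eventually_conj[OF tendstoD[OF \<open>(\<lambda>n. s (xs (r n))) \<longlonglongrightarrow> t\<close> \<eta>] tendstoD[OF yr(3) \<eta>]]
        by (simp add: o_def)
      then obtain n where "dist (s (xs (r n))) t < \<eta> \<and> dist (xs (r n)) y < \<eta>"
        by (auto simp: eventually_sequentially)
      then show ?thesis
        using xs(1) by blast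
    qed
    then show ?thesis
      using yr(1) unfolding value_at_def by blast
  qed
  have close: "\<exists>\<delta>>0. \<forall>t t' y y'. value_at t y \<longrightarrow> value_at t' y' \<longrightarrow> dist t t' < \<delta> \<longrightarrow> dist y y' \<le> \<epsilon>"
    if \<epsilon>: "\<epsilon> > 0" for \<epsilon>
  proof -
    obtain \<delta> where \<delta>: "\<delta> > 0" "\<And>x y. x \<in> X \<Longrightarrow> y \<in> X \<Longrightarrow> dist (s x) (s y) < \<delta> \<Longrightarrow> dist x y < \<epsilon>"
      using modulus[OF \<epsilon>] by blast
    have "dist y y' \<le> \<epsilon>" if y: "value_at t y" and y': "value_at t' y'" and tt': "dist t t' < \<delta>" for t t' y y'
    proof (rule field_le_epsilon)
      fix e :: real assume "e > 0"
      define \<eta> where "\<eta> = min (e/2) ((\<delta> - dist t t') / 2)"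
      have "\<eta> > 0"
        using \<open>e > 0\<close> tt' unfolding \<eta>_def by simp
      have "\<eta> \<le> e/2" "\<eta> \<le> (\<delta> - dist t t') / 2"
        unfolding \<eta>_def by (rule min.cobounded1, rule min.cobounded2)
      obtain x where x: "x \<in> X" "dist (s x) t < \<eta>" "dist x y < \<eta>"
        using y \<open>\<eta> > 0\<close> unfolding value_at_def by blast
      obtain x' where x': "x' \<in> X" "dist (s x') t' < \<eta>" "dist x' y' < \<eta>"
        using y' \<open>\<eta> > 0\<close> unfolding value_at_def by blast
      have "dist (s x) (s x') \<le> dist (s x) t + dist t t' + dist (s x') t'"
        using dist_triangle[of "s x" "s x'" t] dist_triangle[of t "s x'" t'] dist_commute[of "s x'" t'] by linarith
      also have "\<dots> < 2 * \<eta> + dist t t'"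
        using x(2) x'(2) by simp
      also have "\<dots> \<le> \<delta>"
        using \<open>\<eta> \<le> (\<delta> - dist t t') / 2\<close> by simp
      finally have "dist x x' < \<epsilon>"
        by (rule \<delta>(2)[OF x(1) x'(1)])
      moreover have "dist y y' \<le> dist x y + dist x x' + dist x' y'"
        using dist_triangle[of y y' x] dist_triangle[of x y' x'] dist_commute[of y x] by linarith
      ultimately show "dist y y' \<le> \<epsilon> + e"
        using x(3) x'(3) \<open>\<eta> \<le> e/2\<close> by linarith
    qed
    then show ?thesis
      using \<delta>(1) by blast
  qed
  have unique: "y = y'" if "value_at t y" "value_at t y'" for t y y'
  proof -
    have "dist y y' \<le> 0 + \<epsilon>" if \<epsilon>: "\<epsilon> > 0" for \<epsilon>
    proof -
      obtain \<delta> where "\<delta> > 0" "\<forall>t t' y y'. value_at t y \<longrightarrow> value_at t' y' \<longrightarrow> dist t t' < \<delta> \<longrightarrow> dist y y' \<le> \<epsilon>"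
        using close[OF \<epsilon>] by blast
      then show ?thesis
        using \<open>value_at t y\<close> \<open>value_at t y'\<close> by simp
    qed
    then have "dist y y' \<le> 0"
      by (rule field_le_epsilon)
    then show ?thesis
      by simp
  qed
  define p where "p t = (SOME y. value_at t y)" for t
  have p: "value_at t (p t)" if "t \<in> closure (s ` X)" for t
    unfolding p_def using exists[OF that] by (rule someI_ex)
  have "continuous_on (closure (s ` X)) p"
    unfolding continuous_on_iff
  proof (intro ballI allI impI)
    fix t and e :: real assume "t \<in> closure (s ` X)" "e > 0"
    then obtain \<delta> where \<delta>: "\<delta> > 0"
      "\<And>t t' y y'. value_at t y \<Longrightarrow> value_at t' y' \<Longrightarrow> dist t t' < \<delta> \<Longrightarrow> dist y y' \<le> e/2"
      using close[of "e/2"] by auto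
    show "\<exists>d>0. \<forall>t'\<in>closure (s ` X). dist t' t < d \<longrightarrow> dist (p t') (p t) < e"
    proof (intro exI[of _ \<delta>] conjI ballI impI)
      fix t' assume "t' \<in> closure (s ` X)" "dist t' t < \<delta>"
      then have "dist (p t') (p t) \<le> e/2"
        using \<delta>(2) p \<open>t \<in> closure (s ` X)\<close> by blast
      then show "dist (p t') (p t) < e"
        using \<open>e > 0\<close> by simp
    qed (fact \<delta>(1))
  qed
  moreover have "p t \<in> X" if "t \<in> closure (s ` X)" for t
    using p[OF that] unfolding value_at_def by blast
  moreover have "p (s x) = x" if x: "x \<in> X" for x
  proof -
    have "value_at (s x) x"
      unfolding value_at_def
    proof (intro conjI allI impI)
      fix \<eta> :: real assume "0 < \<eta>"
      show "\<exists>x'\<in>X. dist (s x') (s x) < \<eta> \<and> dist x' x < \<eta>"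
      proof
        show "dist (s x) (s x) < \<eta> \<and> dist x x < \<eta>"
          using \<open>0 < \<eta>\<close> by simp
      qed (rule x)
    qed (rule x)
    moreover have "s x \<in> closure (s ` X)"
      by (rule closure_subset[THEN subsetD, OF imageI[OF x]])
    ultimately show ?thesis
      using unique[OF p] by blast
  qed
  ultimately show ?thesis
    by (rule that)
qed

section \<open>Weak limits of Borel probability measures on a compact metric space\<close>

definition infdist_cutoff :: "'a::metric_space set \<Rightarrow> nat \<Rightarrow> 'a \<Rightarrow> real" where
  "infdist_cutoff C k x = max 0 (1 - real k * infdist x C)"

lemma continuous_on_infdist_cutoff: "continuous_on S (infdist_cutoff C k)"
  unfolding infdist_cutoff_def by (intro continuous_intros)

lemma infdist_cutoff_eq_1: "x \<in> C \<Longrightarrow> infdist_cutoff C k x = 1"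
  unfolding infdist_cutoff_def by simp

lemma abs_infdist_cutoff_le_1: "\<bar>infdist_cutoff C k x\<bar> \<le> 1"
  unfolding infdist_cutoff_def using infdist_nonneg[of x C] by auto

lemma infdist_cutoff_tendsto_indicator:
  assumes "closed C" "C \<noteq> {}"
  shows "(\<lambda>k. infdist_cutoff C k x) \<longlonglongrightarrow> indicator C x"
proof (cases "x \<in> C")
  case True
  then show ?thesis
    by (simp add: infdist_cutoff_eq_1)
next
  case False
  then have d: "infdist x C > 0"
    by (rule infdist_pos_not_in_closed[OF assms(1,2)])
  obtain N :: nat where N: "1 / infdist x C < N"
    using reals_Archimedean2 by blast
  have "infdist_cutoff C k x = 0" if "N \<le> k" for k
  proof -
    have "1 / infdist x C < k"
      using N that by linarith
    then have "1 < real k * infdist x C"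
      using d by (simp add: divide_less_eq)
    then show ?thesis
      unfolding infdist_cutoff_def by simp
  qed
  then have "eventually (\<lambda>k. infdist_cutoff C k x = 0) sequentially"
    unfolding eventually_sequentially by blast
  then have "(\<lambda>k. infdist_cutoff C k x) \<longlonglongrightarrow> 0"
    by (rule tendsto_eventually)
  then show ?thesis
    using False by simp
qed

lemma borel_measurable_infdist_cutoff:
  assumes "(\<lambda>x. infdist x C) \<in> borel_measurable M"
  shows "infdist_cutoff C k \<in> borel_measurable M"
proof -
  have "(\<lambda>x. 1 - real k * infdist x C) \<in> borel_measurable M"
    by (intro borel_measurable_diff borel_measurable_const borel_measurable_times assms)
  then show ?thesis
    unfolding infdist_cutoff_def by (intro borel_measurable_max borel_measurable_const)
qed

lemma tendsto_integral_infdist_cutoff: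
  assumes "finite_measure M" "closed C" "C \<noteq> {}" "C \<inter> space M \<in> sets M"
    and "(\<lambda>x. infdist x C) \<in> borel_measurable M"
  shows "(\<lambda>k. \<integral>x. infdist_cutoff C k x \<partial>M) \<longlonglongrightarrow> measure M (C \<inter> space M)"
proof -
  interpret finite_measure M
    by (rule assms(1))
  have "(\<lambda>k. \<integral>x. infdist_cutoff C k x \<partial>M) \<longlonglongrightarrow> (\<integral>x. indicator (C \<inter> space M) x \<partial>M)"
  proof (rule integral_dominated_convergence[where w = "\<lambda>_. 1"])
    show "AE x in M. (\<lambda>k. infdist_cutoff C k x) \<longlonglongrightarrow> indicator (C \<inter> space M) x"
    proof (rule AE_I2)
      fix x assume "x \<in> space M"
      then have "indicator (C \<inter> space M) x = (indicator C x :: real)"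
        by (simp add: indicator_def)
      then show "(\<lambda>k. infdist_cutoff C k x) \<longlonglongrightarrow> indicator (C \<inter> space M) x"
        using infdist_cutoff_tendsto_indicator[OF assms(2,3)] by simp
    qed
  qed (use assms(4,5) abs_infdist_cutoff_le_1 borel_measurable_infdist_cutoff in auto)
  then show ?thesis
    by simp
qed

lemma AE_in_closed_if_integral_infdist_cutoff:
  assumes "prob_space M" "closed C" "C \<noteq> {}" "C \<inter> space M \<in> sets M"
    and "(\<lambda>x. infdist x C) \<in> borel_measurable M" "\<And>k. (\<integral>x. infdist_cutoff C k x \<partial>M) = 1"
  shows "AE x in M. x \<in> C"
proof -
  interpret prob_space M
    by (rule assms(1))
  have "(\<lambda>k. 1) \<longlonglongrightarrow> measure M (C \<inter> space M)"
    using tendsto_integral_infdist_cutoff[OF _ assms(2-5)] assms(6) finite_measure_axioms by simp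
  then have "measure M (C \<inter> space M) = 1"
    using LIMSEQ_unique tendsto_const by metis
  then have "AE x in M. x \<in> C \<inter> space M"
    using assms(4) by (intro AE_prob_1) simp
  then show ?thesis
    by eventually_elim simp
qed

lemma sets_restrict_space_borel_closed:
  fixes X :: "'a::metric_space set"
  assumes "closed X"
  shows "sets (restrict_space borel X) = sigma_sets X ((\<inter>) X ` Collect closed)"
proof -
  have "sets (borel :: 'a measure) = sigma_sets UNIV (Collect closed)"
    by (subst borel_eq_closed) (simp add: sets_measure_of)
  moreover have "X \<in> sigma_sets UNIV (Collect closed)"
    using assms by (auto intro: sigma_sets.Basic)
  ultimately show ?thesis
    unfolding sets_restrict_space by (simp add: sigma_sets_Int)
qed

text \<open>Finite Borel measures on a closed set are determined by their integrals of bounded continuous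
  functions: the cutoffs \<open>infdist_cutoff C k\<close> recover the measure of every closed set \<open>C\<close>.\<close>
lemma finite_measure_eqI_integral_continuous:
  fixes M N :: "'a::metric_space measure"
  assumes "finite_measure M" "finite_measure N" "closed X"
    and sets: "sets M = sets (restrict_space borel X)" "sets N = sets (restrict_space borel X)"
    and integrals: "\<And>f :: 'a \<Rightarrow> real. continuous_on X f \<Longrightarrow> bounded (f ` X) \<Longrightarrow> (\<integral>x. f x \<partial>M) = (\<integral>x. f x \<partial>N)"
  shows "M = N"
proof -
  have space: "space M = X" "space N = X"
    using sets_eq_imp_space_eq[OF sets(1)] sets_eq_imp_space_eq[OF sets(2)] by (simp_all add: space_restrict_space)
  have infdist_meas: "(\<lambda>x. infdist x C) \<in> borel_measurable (restrict_space borel X)" for C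
    by (intro borel_measurable_continuous_on_restrict continuous_intros)
  have closed_eq: "emeasure M (X \<inter> C) = emeasure N (X \<inter> C)" if "closed C" for C
  proof (cases "C = {}")
    case False
    have C_meas: "C \<inter> X \<in> sets (restrict_space borel X)"
      using that by (auto simp: sets_restrict_space)
    have "(\<lambda>k. \<integral>x. infdist_cutoff C k x \<partial>M) \<longlonglongrightarrow> measure M (C \<inter> X)"
      using tendsto_integral_infdist_cutoff[OF assms(1) that False] C_meas infdist_meas
        measurable_cong_sets[OF sets(1) refl] sets(1) space(1) by simp
    moreover have "(\<lambda>k. \<integral>x. infdist_cutoff C k x \<partial>N) \<longlonglongrightarrow> measure N (C \<inter> X)"
      using tendsto_integral_infdist_cutoff[OF assms(2) that False] C_meas infdist_meas
        measurable_cong_sets[OF sets(2) refl] sets(2) space(2) by simp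
    moreover have "(\<integral>x. infdist_cutoff C k x \<partial>M) = (\<integral>x. infdist_cutoff C k x \<partial>N)" for k
      using abs_infdist_cutoff_le_1 by (intro integrals continuous_on_infdist_cutoff) (auto simp: bounded_iff)
    ultimately have "measure M (C \<inter> X) = measure N (C \<inter> X)"
      using LIMSEQ_unique by simp
    then show ?thesis
      using finite_measure.emeasure_eq_measure[OF assms(1)] finite_measure.emeasure_eq_measure[OF assms(2)]
      by (simp add: Int_commute)
  qed simp
  show ?thesis
  proof (rule measure_eqI_generator_eq[where \<Omega> = X and E = "(\<inter>) X ` Collect closed" and A = "\<lambda>_. X"])
    show "Int_stable ((\<inter>) X ` Collect closed)"
    proof (rule Int_stableI)
      fix a b assume "a \<in> (\<inter>) X ` Collect closed" "b \<in> (\<inter>) X ` Collect closed"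
      then obtain c d where "closed c" "closed d" "a = X \<inter> c" "b = X \<inter> d"
        by blast
      then have "a \<inter> b = X \<inter> (c \<inter> d)" "closed (c \<inter> d)"
        by auto
      then show "a \<inter> b \<in> (\<inter>) X ` Collect closed"
        by blast
    qed
    show "sets M = sigma_sets X ((\<inter>) X ` Collect closed)" "sets N = sigma_sets X ((\<inter>) X ` Collect closed)"
      using sets sets_restrict_space_borel_closed[OF assms(3)] by simp_all
    show "emeasure M (X) \<noteq> \<infinity>"
      using finite_measure.emeasure_finite[OF assms(1)] space(1) by simp
  qed (use assms(3) closed_eq in auto)
qed

lemma Helly_selection_Borel_code:
  fixes P :: "nat \<Rightarrow> 'a::metric_space measure" and s :: "'a \<Rightarrow> real" and C :: "real set"
  assumes "\<And>n. prob_space (P n)" "\<And>n. sets (P n) = sets (restrict_space borel X)"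
    and s: "s \<in> borel_measurable borel" "\<And>x. s x \<in> {0..1}"
    and C: "closed C" "\<And>x. x \<in> X \<Longrightarrow> s x \<in> C"
  obtains r L where "strict_mono r" "real_distribution L" "AE t in L. t \<in> C"
    "\<And>(h :: real \<Rightarrow> real) B. (\<And>t. isCont h t) \<Longrightarrow> (\<And>t. \<bar>h t\<bar> \<le> B) \<Longrightarrow> (\<lambda>n. \<integral>x. h (s x) \<partial>P (r n)) \<longlonglongrightarrow> (\<integral>t. h t \<partial>L)"
proof -
  have space: "space (P n) = X" for n
    using sets_eq_imp_space_eq[OF assms(2)] by (simp add: space_restrict_space)
  have s_meas: "s \<in> P n \<rightarrow>\<^sub>M borel" for n
    unfolding measurable_cong_sets[OF assms(2)[of n] refl] by (rule measurable_restrict_space1[OF s(1)])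
  define \<nu> where "\<nu> n = distr (P n) borel s" for n
  have \<nu>: "real_distribution (\<nu> n)" for n
    unfolding \<nu>_def real_distribution_def real_distribution_axioms_def
    using prob_space.prob_space_distr[OF assms(1) s_meas] by simp
  have "tight \<nu>"
    unfolding tight_def
  proof (intro conjI allI impI)
    show "real_distribution (\<nu> n)" for n
      by (rule \<nu>)
    fix e :: real assume "e > 0"
    have "measure (\<nu> n) {-1<..2} = 1" for n
    proof -
      have "measure (\<nu> n) {-1<..2} = measure (P n) (s -` {-1<..2} \<inter> space (P n))"
        unfolding \<nu>_def by (rule measure_distr[OF s_meas]) simp
      also have "s -` {-1<..2} \<inter> space (P n) = space (P n)"
      proof -
        have "-1 < s x \<and> s x \<le> 2" for x
          using s(2)[of x] by simp
        then show ?thesis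
          by auto
      qed
      finally show ?thesis
        using prob_space.prob_space[OF assms(1)] by simp
    qed
    then have "(-1::real) < 2 \<and> (\<forall>n. 1 - e < measure (\<nu> n) {-1<..2})"
      using \<open>e > 0\<close> by simp
    then show "\<exists>a b. a < b \<and> (\<forall>n. 1 - e < measure (\<nu> n) {a<..b})"
      by blast
  qed
  then obtain r L where r: "strict_mono r" "real_distribution L" "weak_conv_m (\<nu> \<circ> id \<circ> r) L"
    using tight_imp_convergent_subsubsequence[OF _ strict_mono_id] by blast
  have conv: "(\<lambda>n. \<integral>x. h (s x) \<partial>P (r n)) \<longlonglongrightarrow> (\<integral>t. h t \<partial>L)"
    if h: "\<And>t. isCont h t" "\<And>t. \<bar>h t\<bar> \<le> B" for h :: "real \<Rightarrow> real" and B
  proof -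
    have "h \<in> borel_measurable borel"
      using h(1) by (intro borel_measurable_continuous_onI continuous_at_imp_continuous_on) auto
    then have "(\<integral>t. h t \<partial>\<nu> n) = (\<integral>x. h (s x) \<partial>P n)" for n
      unfolding \<nu>_def by (rule integral_distr[OF s_meas])
    moreover have "(\<lambda>n. \<integral>t. h t \<partial>(\<nu> \<circ> id \<circ> r) n) \<longlonglongrightarrow> (\<integral>t. h t \<partial>L)"
      using \<nu> r(2,3) h by (intro weak_conv_imp_integral_bdd_continuous_conv) (auto simp: o_def)
    ultimately show ?thesis
      by simp
  qed
  have "AE t in L. t \<in> C"
  proof (rule AE_in_closed_if_integral_infdist_cutoff)
    interpret L: real_distribution L
      by (rule r(2))
    show "prob_space L" "closed C"
      by (simp_all add: L.prob_space_axioms C(1))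
    obtain x where "x \<in> space (P 0)"
      using prob_space.not_empty[OF assms(1)] by blast
    then show "C \<noteq> {}"
      using space C(2) by blast
    show "C \<inter> space L \<in> sets L" "(\<lambda>t. infdist t (C)) \<in> borel_measurable L"
      using C(1) by (simp_all add: borel_measurable_continuous_onI continuous_on_infdist continuous_on_id)
    fix k
    have "(\<lambda>n. \<integral>x. infdist_cutoff (C) k (s x) \<partial>P (r n)) \<longlonglongrightarrow> (\<integral>t. infdist_cutoff (C) k t \<partial>L)"
      using continuous_on_infdist_cutoff[of UNIV] abs_infdist_cutoff_le_1
      by (intro conv) (auto simp: continuous_on_eq_continuous_at)
    moreover have "(\<integral>x. infdist_cutoff (C) k (s x) \<partial>P n) = 1" for n
    proof -
      have sx: "s x \<in> C" if "x \<in> space (P n)" for x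
        using that space C(2) by simp
      have "(\<integral>x. infdist_cutoff (C) k (s x) \<partial>P n) = (\<integral>x. 1 \<partial>P n)"
        by (intro Bochner_Integration.integral_cong refl) (simp add: infdist_cutoff_eq_1 sx)
      then show ?thesis
        using prob_space.prob_space[OF assms(1)] by simp
    qed
    ultimately have "(\<lambda>n. 1) \<longlonglongrightarrow> (\<integral>t. infdist_cutoff (C) k t \<partial>L)"
      by simp
    then show "(\<integral>t. infdist_cutoff (C) k t \<partial>L) = 1"
      using LIMSEQ_unique tendsto_const by metis
  qed
  with r(1,2) conv show ?thesis
    using that by blast
qed

text \<open>The limit is built on the real line by Helly's theorem and pulled back along the
  continuous inverse of a Borel code.\<close>
theorem weak_conv_subseq_compact_metric:
  fixes X :: "'a::metric_space set" and P :: "nat \<Rightarrow> 'a measure"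
  assumes "compact X" "X \<noteq> {}" "\<And>n. prob_space (P n)" "\<And>n. sets (P n) = sets (restrict_space borel X)"
  obtains r \<mu> where "strict_mono r" "prob_space \<mu>" "sets \<mu> = sets (restrict_space borel X)"
    "\<And>f :: 'a \<Rightarrow> real. continuous_on X f \<Longrightarrow> (\<lambda>n. \<integral>x. f x \<partial>P (r n)) \<longlonglongrightarrow> (\<integral>x. f x \<partial>\<mu>)"
proof -
  obtain s :: "'a \<Rightarrow> real" where s: "s \<in> borel_measurable borel" "\<And>x. s x \<in> {0..1}"
    "\<And>\<epsilon>. \<epsilon> > 0 \<Longrightarrow> \<exists>\<delta>>0. \<forall>x\<in>X. \<forall>y\<in>X. \<bar>s x - s y\<bar> < \<delta> \<longrightarrow> dist x y < \<epsilon>"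
    using compact_Borel_code[OF assms(1,2)] by blast
  define C where "C = closure (s ` X)"
  have "closed C"
    unfolding C_def by simp
  have sC: "s x \<in> C" if "x \<in> X" for x
    unfolding C_def by (rule closure_subset[THEN subsetD, OF imageI[OF that]])
  obtain p where p: "continuous_on C p" "\<And>t. t \<in> C \<Longrightarrow> p t \<in> X" "\<And>x. x \<in> X \<Longrightarrow> p (s x) = x"
    using compact_inverse_extends_to_closure[OF assms(1), of s] s(3) unfolding C_def dist_real_def by blast
  obtain r L where r: "strict_mono r" "real_distribution L" "AE t in L. t \<in> C"
    and conv: "\<And>(h :: real \<Rightarrow> real) B. (\<And>t. isCont h t) \<Longrightarrow> (\<And>t. \<bar>h t\<bar> \<le> B) \<Longrightarrow>
      (\<lambda>n. \<integral>x. h (s x) \<partial>P (r n)) \<longlonglongrightarrow> (\<integral>t. h t \<partial>L)"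
    using Helly_selection_Borel_code[of P X s C] assms(3,4) s(1,2) \<open>closed C\<close> sC by blast
  interpret L: real_distribution L
    by (rule r(2))
  obtain x0 where "x0 \<in> X"
    using assms(2) by blast
  define q where "q t = (if t \<in> C then p t else x0)" for t
  have q_meas: "q \<in> L \<rightarrow>\<^sub>M restrict_space borel X"
  proof (rule measurable_restrict_space2)
    show "q \<in> space L \<rightarrow> X"
      unfolding q_def using p(2) \<open>x0 \<in> X\<close> by auto
    have "{t \<in> space borel. t \<in> C} \<in> sets borel"
      unfolding C_def by simp
    moreover have "p \<in> restrict_space borel C \<rightarrow>\<^sub>M borel"
      by (rule borel_measurable_continuous_on_restrict[OF p(1)])
    ultimately have "q \<in> borel \<rightarrow>\<^sub>M borel"
      unfolding q_def by (intro measurable_If_restrict_space_iff[THEN iffD2] conjI) simp_all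
    then show "q \<in> L \<rightarrow>\<^sub>M borel"
      using measurable_cong_sets[OF L.events_eq_borel refl] by simp
  qed
  define \<mu> where "\<mu> = distr L (restrict_space borel X) q"
  have "prob_space \<mu>"
    unfolding \<mu>_def by (rule L.prob_space_distr[OF q_meas])
  moreover have "sets \<mu> = sets (restrict_space borel X)"
    unfolding \<mu>_def by simp
  moreover have "(\<lambda>n. \<integral>x. f x \<partial>P (r n)) \<longlonglongrightarrow> (\<integral>x. f x \<partial>\<mu>)"
    if f: "continuous_on X f" for f :: "'a \<Rightarrow> real"
  proof -
    obtain B where B: "\<And>x. x \<in> X \<Longrightarrow> \<bar>f x\<bar> \<le> B" "B \<ge> 0"
      using compact_imp_bounded[OF compact_continuous_image[OF f assms(1)]] unfolding bounded_real
      by (metis abs_ge_zero image_eqI order.trans)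
    have "continuous_on C (f \<circ> p)"
      using continuous_on_compose[OF p(1)] continuous_on_subset[OF f] p(2) by blast
    moreover have "closedin (top_of_set UNIV) C"
      unfolding C_def by simp
    ultimately obtain H where H: "continuous_on UNIV H" "\<And>t. t \<in> C \<Longrightarrow> H t = f (p t)" "\<And>t. \<bar>H t\<bar> \<le> B"
      using Tietze[of C "f \<circ> p" UNIV B] B p(2) by auto
    have "(\<integral>x. f x \<partial>\<mu>) = (\<integral>t. f (q t) \<partial>L)"
      unfolding \<mu>_def using f by (intro integral_distr q_meas borel_measurable_continuous_on_restrict)
    also have "\<dots> = (\<integral>t. H t \<partial>L)"
    proof (rule integral_cong_AE)
      show "(\<lambda>t. f (q t)) \<in> borel_measurable L"
        by (rule measurable_compose[OF q_meas borel_measurable_continuous_on_restrict[OF f]])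
      show "H \<in> borel_measurable L"
        using borel_measurable_continuous_onI[OF H(1)] measurable_cong_sets[OF L.events_eq_borel refl] by simp
      show "AE t in L. f (q t) = H t"
        using r(3) by eventually_elim (simp add: q_def H(2))
    qed
    finally have "(\<integral>x. f x \<partial>\<mu>) = (\<integral>t. H t \<partial>L)" .
    moreover have "(\<integral>x. f x \<partial>P n) = (\<integral>x. H (s x) \<partial>P n)" for n
    proof (intro Bochner_Integration.integral_cong refl)
      fix x assume "x \<in> space (P n)"
      then have "x \<in> X"
        using sets_eq_imp_space_eq[OF assms(4)] by (simp add: space_restrict_space)
      moreover have "s x \<in> C"
        using \<open>x \<in> X\<close> by (rule sC)
      ultimately show "f x = H (s x)"
        using H(2) p(3) by simp
    qed
    moreover have "(\<lambda>n. \<integral>x. H (s x) \<partial>P (r n)) \<longlonglongrightarrow> (\<integral>t. H t \<partial>L)"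
      using H(1,3) by (intro conv) (auto simp: continuous_on_eq_continuous_at)
    ultimately show ?thesis
      by simp
  qed
  ultimately show ?thesis
    using r(1) that by blast
qed

section \<open>Invariant measures from Folner averages\<close>

lemma abs_sum_left_transl_diff_le:
  fixes \<phi> :: "'g::group_add \<Rightarrow> real"
  assumes "finite F" "\<And>g. \<bar>\<phi> g\<bar> \<le> B"
  shows "\<bar>(\<Sum>g\<in>F. \<phi> (h + g)) - (\<Sum>g\<in>F. \<phi> g)\<bar> \<le> B * card (symdiff (left_transl h F) F)"
proof -
  define L where "L = left_transl h F"
  have "finite L"
    unfolding L_def left_transl_def using assms(1) by simp
  have bound: "\<bar>sum \<phi> S\<bar> \<le> B * card S" for S
  proof -
    have "\<bar>sum \<phi> S\<bar> \<le> (\<Sum>g\<in>S. \<bar>\<phi> g\<bar>)"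
      by (rule sum_abs)
    also have "\<dots> \<le> of_nat (card S) * B"
      by (rule sum_bounded_above) (rule assms(2))
    finally show ?thesis
      by (simp add: mult.commute)
  qed
  have "(\<Sum>g\<in>F. \<phi> (h + g)) = sum \<phi> L"
    unfolding L_def left_transl_def by (subst sum.reindex) (auto simp: inj_on_def)
  moreover have "sum \<phi> L - sum \<phi> F = sum \<phi> (L - F) - sum \<phi> (F - L)"
    using sum.Int_Diff[OF \<open>finite L\<close>, of \<phi> F] sum.Int_Diff[OF assms(1), of \<phi> L] by (simp add: Int_commute)
  moreover have "\<bar>sum \<phi> (L - F) - sum \<phi> (F - L)\<bar> \<le> B * card (L - F) + B * card (F - L)"
    using abs_triangle_ineq4[of "sum \<phi> (L - F)" "sum \<phi> (F - L)"] bound[of "L - F"] bound[of "F - L"] by linarith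
  moreover have "card (symdiff L F) = card (L - F) + card (F - L)"
    unfolding symdiff_def using \<open>finite L\<close> assms(1) by (intro card_Un_disjoint) auto
  ultimately show ?thesis
    unfolding L_def[symmetric] by (simp add: distrib_left)
qed

context group_system
begin

definition orbit_measure :: "'g set \<Rightarrow> 'a \<Rightarrow> 'a measure" where
  "orbit_measure E x = distr (measure_pmf (pmf_of_set E)) (restrict_space borel X) (\<lambda>g. T g x)"

context
  fixes E :: "'g set" and x :: 'a
  assumes E: "finite E" "E \<noteq> {}" and x: "x \<in> X"
begin

lemma measurable_orbit: "(\<lambda>g. T g x) \<in> measure_pmf (pmf_of_set E) \<rightarrow>\<^sub>M restrict_space borel X"
  using maps_into[OF x] by (intro measurable_restrict_space2) auto

lemma prob_space_orbit_measure: "prob_space (orbit_measure E x)"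
  unfolding orbit_measure_def by (rule prob_space.prob_space_distr[OF prob_space_measure_pmf measurable_orbit])

lemma sets_orbit_measure: "sets (orbit_measure E x) = sets (restrict_space borel X)"
  unfolding orbit_measure_def by simp

lemma integral_orbit_measure:
  assumes "f \<in> borel_measurable (restrict_space borel X)"
  shows "(\<integral>y. f y \<partial>orbit_measure E x) = (\<Sum>g\<in>E. f (T g x)) / card E"
  unfolding orbit_measure_def using E
  by (simp add: integral_distr[OF measurable_orbit assms] integral_pmf_of_set)

end

text \<open>By the left Folner property, averaging \<open>f \<circ> T h\<close> and \<open>f\<close> over the orbit segments
  \<open>F\<^sub>n x\<^sub>0\<close> gives asymptotically equal results, so every weak limit is \<open>T h\<close>-invariant.\<close>
lemma weak_limit_orbit_measures_invariant:
  assumes x0: "x0 \<in> X" and F: "\<And>n. finite (F n)" "\<And>n. F n \<noteq> {}"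
    and folner: "(\<lambda>n. real (card (symdiff (left_transl h (F n)) (F n))) / real (card (F n))) \<longlonglongrightarrow> 0"
    and \<mu>: "prob_space \<mu>" "sets \<mu> = sets (restrict_space borel X)"
    and lim: "\<And>f :: 'a \<Rightarrow> real. continuous_on X f \<Longrightarrow>
      (\<lambda>n. \<integral>x. f x \<partial>orbit_measure (F n) x0) \<longlonglongrightarrow> (\<integral>x. f x \<partial>\<mu>)"
  shows "distr \<mu> (restrict_space borel X) (T h) = \<mu>"
proof -
  have T_meas: "T h \<in> restrict_space borel X \<rightarrow>\<^sub>M restrict_space borel X"
    using maps_into by (intro measurable_restrict_space2 borel_measurable_continuous_on_restrict continuous_act)
      (auto simp: space_restrict_space)
  then have T_meas_\<mu>: "T h \<in> \<mu> \<rightarrow>\<^sub>M restrict_space borel X"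
    unfolding measurable_cong_sets[OF \<mu>(2) refl] .
  have inv: "(\<integral>x. f (T h x) \<partial>\<mu>) = (\<integral>x. f x \<partial>\<mu>)" if f: "continuous_on X f" for f :: "'a \<Rightarrow> real"
  proof -
    obtain B where B: "\<And>x. x \<in> X \<Longrightarrow> \<bar>f x\<bar> \<le> B"
      using compact_imp_bounded[OF compact_continuous_image[OF f compact]] unfolding bounded_real by auto
    have fT: "continuous_on X (\<lambda>x. f (T h x))"
      using continuous_on_compose2[OF f continuous_act] maps_into by blast
    have meas: "g \<in> borel_measurable (restrict_space borel X)" if "continuous_on X g" for g :: "'a \<Rightarrow> real"
      using that by (rule borel_measurable_continuous_on_restrict)
    have diff: "\<bar>(\<integral>x. f (T h x) \<partial>orbit_measure (F n) x0) - (\<integral>x. f x \<partial>orbit_measure (F n) x0)\<bar>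
        \<le> B * (real (card (symdiff (left_transl h (F n)) (F n))) / real (card (F n)))" for n
    proof -
      have c: "real (card (F n)) > 0"
        using F by (simp add: card_gt_0_iff)
      have "(\<Sum>g\<in>F n. f (T h (T g x0))) = (\<Sum>g\<in>F n. f (T (h + g) x0))"
        using act_add[OF x0] by simp
      then have sums: "\<bar>(\<Sum>g\<in>F n. f (T h (T g x0))) - (\<Sum>g\<in>F n. f (T g x0))\<bar>
          \<le> B * card (symdiff (left_transl h (F n)) (F n))"
        using abs_sum_left_transl_diff_le[OF F(1), of "\<lambda>g. f (T g x0)" B h] B maps_into[OF x0] by simp
      have "(\<integral>x. f (T h x) \<partial>orbit_measure (F n) x0) - (\<integral>x. f x \<partial>orbit_measure (F n) x0)
          = ((\<Sum>g\<in>F n. f (T h (T g x0))) - (\<Sum>g\<in>F n. f (T g x0))) / card (F n)"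
        by (simp add: integral_orbit_measure[OF F(1,2) x0] meas[OF fT] meas[OF f] diff_divide_distrib)
      then have "\<bar>(\<integral>x. f (T h x) \<partial>orbit_measure (F n) x0) - (\<integral>x. f x \<partial>orbit_measure (F n) x0)\<bar>
          = \<bar>(\<Sum>g\<in>F n. f (T h (T g x0))) - (\<Sum>g\<in>F n. f (T g x0))\<bar> / card (F n)"
        using c by simp
      also have "\<dots> \<le> B * card (symdiff (left_transl h (F n)) (F n)) / card (F n)"
        by (rule divide_right_mono[OF sums]) (use c in simp)
      finally show ?thesis
        by simp
    qed
    have "eventually (\<lambda>n. norm ((\<integral>x. f (T h x) \<partial>orbit_measure (F n) x0) - (\<integral>x. f x \<partial>orbit_measure (F n) x0))
        \<le> B * (real (card (symdiff (left_transl h (F n)) (F n))) / real (card (F n)))) sequentially"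
      by (intro always_eventually allI) (simp only: real_norm_def diff)
    from Lim_null_comparison[OF this tendsto_mult_right_zero[OF folner]]
    have "(\<lambda>n. (\<integral>x. f (T h x) \<partial>orbit_measure (F n) x0) - (\<integral>x. f x \<partial>orbit_measure (F n) x0)) \<longlonglongrightarrow> 0" .
    moreover have "(\<lambda>n. (\<integral>x. f (T h x) \<partial>orbit_measure (F n) x0) - (\<integral>x. f x \<partial>orbit_measure (F n) x0))
        \<longlonglongrightarrow> (\<integral>x. f (T h x) \<partial>\<mu>) - (\<integral>x. f x \<partial>\<mu>)"
      by (intro tendsto_diff lim fT f)
    ultimately have "(\<integral>x. f (T h x) \<partial>\<mu>) - (\<integral>x. f x \<partial>\<mu>) = 0"
      by (rule LIMSEQ_unique[rotated])
    then show ?thesis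
      by simp
  qed
  show ?thesis
  proof (rule finite_measure_eqI_integral_continuous[where X = X])
    show "finite_measure (distr \<mu> (restrict_space borel X) (T h))"
      by (rule prob_space.finite_measure[OF prob_space.prob_space_distr[OF \<mu>(1) T_meas_\<mu>]])
    show "finite_measure \<mu>"
      by (rule prob_space.finite_measure[OF \<mu>(1)])
    show "closed X"
      by (rule compact_imp_closed[OF compact])
    show "sets (distr \<mu> (restrict_space borel X) (T h)) = sets (restrict_space borel X)" "sets \<mu> = sets (restrict_space borel X)"
      by (simp_all add: \<mu>(2))
    fix f :: "'a \<Rightarrow> real" assume "continuous_on X f"
    then show "(\<integral>x. f x \<partial>distr \<mu> (restrict_space borel X) (T h)) = (\<integral>x. f x \<partial>\<mu>)"
      using inv by (simp add: integral_distr[OF T_meas_\<mu>] borel_measurable_continuous_on_restrict)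
  qed
qed

end

context group_system
begin

text \<open>Krylov--Bogolyubov: weak limits of the uniform measures on the orbit segments \<open>F\<^sub>n x\<^sub>0\<close>
  of a point \<open>x\<^sub>0 \<in> A\<close> are invariant and, \<open>A\<close> being closed, still concentrated on \<open>A\<close>.\<close>
theorem invariant_measure_on_closed_invariant_set:
  fixes F :: "nat \<Rightarrow> 'g set" and A :: "'a set"
  assumes "folner_seq F" "closed A" "A \<subseteq> X" "A \<noteq> {}" "\<And>g x. x \<in> A \<Longrightarrow> T g x \<in> A"
  shows "\<exists>\<mu>\<in>invariant_measures X T. AE x in \<mu>. x \<in> A"
proof -
  have F: "\<And>n. finite (F n)" "\<And>n. F n \<noteq> {}"
    and folner: "\<And>h. (\<lambda>n. real (card (symdiff (left_transl h (F n)) (F n))) / real (card (F n))) \<longlonglongrightarrow> 0"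
    using assms(1) unfolding folner_seq_def by auto
  obtain x0 where x0: "x0 \<in> A"
    using assms(4) by blast
  then have "x0 \<in> X"
    using assms(3) by blast
  obtain r \<mu> where r: "strict_mono r" and \<mu>: "prob_space \<mu>" "sets \<mu> = sets (restrict_space borel X)"
    and lim: "\<And>f :: 'a \<Rightarrow> real. continuous_on X f \<Longrightarrow>
      (\<lambda>n. \<integral>x. f x \<partial>orbit_measure (F (r n)) x0) \<longlonglongrightarrow> (\<integral>x. f x \<partial>\<mu>)"
    using weak_conv_subseq_compact_metric[OF compact, of "\<lambda>n. orbit_measure (F n) x0"]
      prob_space_orbit_measure[OF F \<open>x0 \<in> X\<close>] sets_orbit_measure[OF F \<open>x0 \<in> X\<close>] \<open>x0 \<in> X\<close> by blast
  have T_meas: "T g \<in> \<mu> \<rightarrow>\<^sub>M restrict_space borel X" for g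
    unfolding measurable_cong_sets[OF \<mu>(2) refl] using maps_into
    by (intro measurable_restrict_space2 borel_measurable_continuous_on_restrict continuous_act)
      (auto simp: space_restrict_space)
  have "distr \<mu> (restrict_space borel X) (T g) = \<mu>" for g
  proof (rule weak_limit_orbit_measures_invariant[where F = "\<lambda>n. F (r n)"])
    show "(\<lambda>n. real (card (symdiff (left_transl g (F (r n))) (F (r n)))) / real (card (F (r n)))) \<longlonglongrightarrow> 0"
      using LIMSEQ_subseq_LIMSEQ[OF folner r] by (simp add: o_def)
  qed (use \<open>x0 \<in> X\<close> F \<mu> lim in auto)
  then have "emeasure \<mu> (T g -` B \<inter> space \<mu>) = emeasure \<mu> B" if "B \<in> sets \<mu>" for g B
    using emeasure_distr[OF T_meas, of B g] that \<mu>(2) by simp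
  moreover have "T g \<in> \<mu> \<rightarrow>\<^sub>M \<mu>" for g
    unfolding measurable_cong_sets[OF refl \<mu>(2)] by (rule T_meas)
  ultimately have "\<mu> \<in> invariant_measures X T"
    unfolding invariant_measures_def using \<mu> by blast
  moreover have "AE x in \<mu>. x \<in> A"
  proof (rule AE_in_closed_if_integral_infdist_cutoff[OF \<mu>(1) assms(2,4)])
    have "A \<in> sets \<mu>"
      using \<mu>(2) assms(2,3) by (auto simp: sets_restrict_space)
    then show "A \<inter> space \<mu> \<in> sets \<mu>"
      by simp
    show "(\<lambda>x. infdist x A) \<in> borel_measurable \<mu>"
      unfolding measurable_cong_sets[OF \<mu>(2) refl]
      by (intro borel_measurable_continuous_on_restrict continuous_intros)
      fix k
      have "(\<integral>x. infdist_cutoff A k x \<partial>orbit_measure (F n) x0) = 1" for n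
      proof -
        have "(\<integral>x. infdist_cutoff A k x \<partial>orbit_measure (F n) x0) = (\<Sum>g\<in>F n. 1) / card (F n)"
          using assms(5)[OF x0]
          by (simp add: integral_orbit_measure[OF F \<open>x0 \<in> X\<close>] borel_measurable_continuous_on_restrict
              continuous_on_infdist_cutoff infdist_cutoff_eq_1)
        then show ?thesis
          using F by simp
      qed
      then show "(\<integral>x. infdist_cutoff A k x \<partial>\<mu>) = 1"
        using LIMSEQ_unique[OF lim[OF continuous_on_infdist_cutoff]] by simp
  qed
  ultimately show ?thesis
    by blast
qed

end

lemma invariant_measures_space:
  assumes "\<mu> \<in> invariant_measures X T"
  shows "prob_space \<mu>" "space \<mu> = X"
  using assms sets_eq_imp_space_eq[of \<mu> "restrict_space borel X"] unfolding invariant_measures_def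
  by (auto simp: space_restrict_space)

lemma nn_integral_e2ennreal_le_const:
  assumes "prob_space M" "\<And>x. x \<in> space M \<Longrightarrow> f x \<le> c"
  shows "(\<integral>\<^sup>+ x. e2ennreal (f x) \<partial>M) \<le> e2ennreal c"
proof -
  have "(\<integral>\<^sup>+ x. e2ennreal (f x) \<partial>M) \<le> (\<integral>\<^sup>+ x. e2ennreal c \<partial>M)"
    using assms(2) by (intro nn_integral_mono e2ennreal_mono)
  then show ?thesis
    using prob_space.emeasure_space_1[OF assms(1)] by simp
qed

lemma nn_integral_e2ennreal_eq_const:
  assumes "prob_space M" "AE x in M. f x = c"
  shows "(\<integral>\<^sup>+ x. e2ennreal (f x) \<partial>M) = e2ennreal c"
proof -
  have "(\<integral>\<^sup>+ x. e2ennreal (f x) \<partial>M) = (\<integral>\<^sup>+ x. e2ennreal c \<partial>M)"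
    using assms(2) by (intro nn_integral_cong_AE) auto
  then show ?thesis
    using prob_space.emeasure_space_1[OF assms(1)] by simp
qed

theorem theorem1p4:
  fixes X :: "'a::metric_space set" and T :: "'g::group_add \<Rightarrow> 'a \<Rightarrow> 'a"
    and F :: "nat \<Rightarrow> 'g set"
  assumes "countable (UNIV :: 'g set)" and "infinite (UNIV :: 'g set)"
    and "amenable_group TYPE('g)"
    and "G_system X T" and "X \<noteq> {}"
    and "two_sided_folner_seq F" and "tempered F"
  shows "(\<exists>x0\<in>X. local_umdim_M X T F x0 = umdim_M T X F) \<and>
         (\<forall>x\<in>X. local_umdim_M X T F x \<le> umdim_M T X F) \<and>
         (\<exists>\<mu>0\<in>invariant_measures X T.
            (\<integral>\<^sup>+ x. e2ennreal (local_umdim_M X T F x) \<partial>\<mu>0) = e2ennreal (umdim_M T X F)) \<and>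
         (\<forall>\<mu>\<in>invariant_measures X T.
            (\<integral>\<^sup>+ x. e2ennreal (local_umdim_M X T F x) \<partial>\<mu>) \<le> e2ennreal (umdim_M T X F))"
proof -
  interpret group_system X T
    by (rule group_system.intro[OF assms(4)])
  have F: "folner_seq F" "\<And>n. finite (F n)" "\<And>n. F n \<noteq> {}"
    using assms(6) unfolding two_sided_folner_seq_def folner_seq_def by auto
  define A where "A = {x \<in> X. umdim_M T X F \<le> local_umdim_M X T F x}"
  have le: "\<forall>x\<in>X. local_umdim_M X T F x \<le> umdim_M T X F"
    using local_umdim_M_le_umdim_M[OF compact_imp_closed[OF compact]] by blast
  have attained: "\<exists>x0\<in>X. local_umdim_M X T F x0 = umdim_M T X F"
    by (rule local_umdim_M_attains_umdim_M[OF assms(5) F(2,3)])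
  then have "A \<noteq> {}"
    unfolding A_def by force
  moreover have "closed A" "A \<subseteq> X"
    unfolding A_def using closed_local_umdim_M_ge[OF compact_imp_closed[OF compact]] by auto
  moreover have "T g x \<in> A" if "x \<in> A" for g x
    using that maps_into local_umdim_M_act[OF _ assms(6)] unfolding A_def by auto
  ultimately obtain \<mu>0 where \<mu>0: "\<mu>0 \<in> invariant_measures X T" "AE x in \<mu>0. x \<in> A"
    using invariant_measure_on_closed_invariant_set[OF F(1)] by blast
  from \<mu>0(2) have full: "AE x in \<mu>0. local_umdim_M X T F x = umdim_M T X F"
    by eventually_elim (use le in \<open>auto simp: A_def intro: antisym\<close>)
  show ?thesis
    using attained le \<mu>0(1) nn_integral_e2ennreal_eq_const[OF invariant_measures_space(1) full]
      nn_integral_e2ennreal_le_const[OF invariant_measures_space(1)] invariant_measures_space(2) by blast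
qed

end
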